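(* Let $(\mathcal{C},\mathbb{E},\mathfrak{s})$ be an extriangulated category and $\mathcal{I}$ an ideal of $\mathcal{C}$. Consider: (a) there is an additive subfunctor $\mathbb{F}\subseteq\mathbb{E}$ having enough injective objects with $\mathcal{I}=\mathrm{Ph}(\mathbb{F})$; (a') there is an additive subfunctor $\mathbb{F}\subseteq\mathbb{E}$ having enough special injective objects with $\mathcal{I}=\mathrm{Ph}(\mathbb{F})$; (b) $\mathcal{I}$ is an object-special precovering ideal; (c) $\mathcal{I}^\star$ has enough special injective objects and $\mathcal{I}=\mathrm{Ph}(\mathcal{I}^\star)$; (d) $\mathcal{I}$ is a special precovering ideal and $\mathcal{I}^{\perp_{\mathbb{E}}}$ is an object ideal. Then: (I) if $\mathcal{C}$ has enough projective morphisms, (a) (and hence (a')) implies (b); (II) if $\mathcal{C}$ has enough injective objects, (b) implies (c); (III) if $\mathcal{C}$ has enough projective morphisms, (c) implies (d); (IV) (d) implies (b); (V) (c) implies (a').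
   Context: An extriangulated category $(\mathcal{C},\mathbb{E},\mathfrak{s})$ (Nakaoka–Palu): additive $\mathcal{C}$, biadditive $\mathbb{E}:\mathcal{C}^{\mathrm{op}}\times\mathcal{C}\to\mathrm{Ab}$, additive realization $\mathfrak{s}$ assigning to each $\delta\in\mathbb{E}(C,A)$ an equivalence class of sequences $A\to B\to C$, forming $\mathbb{E}$-triangles $A\to B\to C\overset{\delta}{\dashrightarrow}$, satisfying (ET1)–(ET4), (ET3)$^{\mathrm{op}}$, (ET4)$^{\mathrm{op}}$. Notation $a_\star\delta=\mathbb{E}(C,a)(\delta)$, $c^\star\delta=\mathbb{E}(c,A)(\delta)$; a morphism of $\mathbb{E}$-triangles is a commuting triple $(a,b,c)$ with $a_\star\delta=c^\star\delta'$. Enough injective objects: every $A$ admits an $\mathbb{E}$-triangle $A\to E\to C\overset{\delta}{\dashrightarrow}$ with $\mathbb{E}(-,E)=0$. Enough projective morphisms: every $C$ admits an $\mathbb{E}$-triangle $K\to P\xrightarrow{p}C\overset{\gamma}{\dashrightarrow}$ with $p^\star\delta=0$ for all $\delta\in\mathbb{E}(C,A)$. Ideal: class of morphisms with zeros, closed under sums and two-sided composition. Additive subfunctor $\mathbb{F}$: subgroups $\mathbb{F}(C,A)\subseteq\mathbb{E}(C,A)$ stable under $a_\star,c^\star$; $\mathbb{F}$-triangles have extension in $\mathbb{F}$, $\mathbb{F}$-inflations are their first morphisms. $\mathrm{Ph}(\mathbb{F})$: $\varphi:X\to C$ with $\varphi^\star\delta\in\mathbb{F}(X,A)$ for all $\delta\in\mathbb{E}(C,A)$.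 $\mathbb{F}\text{-}\mathrm{inj}$: $i:A\to Y$ with $i_\star\delta=0$ for all $\delta\in\mathbb{F}(C,A)$; an object $B$ is $\mathbb{F}$-injective if $\mathrm{id}_B\in\mathbb{F}\text{-}\mathrm{inj}$. $\mathbb{F}$ has enough injective objects: every $A$ admits an $\mathbb{F}$-triangle $A\xrightarrow{e}B\to C\overset{\delta}{\dashrightarrow}$ with $B$ $\mathbb{F}$-injective; enough special injective objects: moreover there is an $\mathbb{E}$-triangle $A\to B'\to C'\overset{\delta'}{\dashrightarrow}$ and a morphism $(\mathrm{id}_A,b,\varphi)$ from the former to it with $\varphi\in\mathrm{Ph}(\mathbb{F})$. $\mathcal{I}^\star(X,A)=\{i^\star\delta\mid i\in\mathcal{I}(X,C),\delta\in\mathbb{E}(C,A)\}$. $\mathcal{I}^{\perp_{\mathbb{E}}}=\{g:A\to Y\mid m^\star g_\star\delta=0\ \forall m\in\mathcal{I},\,m:X\to C,\ \forall\delta\in\mathbb{E}(C,A)\}$. For a class $\mathcal{K}$ of morphisms, $\mathrm{Ob}(\mathcal{K})=\{A\mid\mathrm{id}_A\in\mathcal{K}\}$, $\langle\mathcal{K}\rangle$ the smallest ideal containing $\mathcal{K}$; $\mathcal{K}$ is an object ideal if $\mathcal{K}=\langle\mathrm{Ob}(\mathcal{K})\rangle$; $A\in\mathcal{K}$ means $A\in\mathrm{Ob}(\mathcal{K})$. Special $\mathcal{I}$-precover of $C$: $i:X\to C$ in $\mathcal{I}$ with $\mathbb{E}$-triangles $A\to B\to C\overset{\delta}{\dashrightarrow}$,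 $A'\to X\xrightarrow{i}C\overset{\delta'}{\dashrightarrow}$ and a morphism $(j,b,\mathrm{id}_C)$ between them, $j\in\mathcal{I}^{\perp_{\mathbb{E}}}$. Object-special $\mathcal{I}$-precover of $C$: $i:X\to C$ in $\mathcal{I}$ with an $\mathbb{E}$-triangle $A\to X\xrightarrow{i}C\overset{\delta}{\dashrightarrow}$, $A\in\mathcal{I}^{\perp_{\mathbb{E}}}$. (Object-)special precovering ideal: every object has such a precover. *)

theory Defs
  imports Main
begin

text \<open>
Objects have type 'o, morphisms 'm, extensions 'e.  Everything is
relativised to the object set Obj and to hom-sets Hom X Y; operations
take the relevant objects as explicit arguments.

Conventions:
  cmp X Y Z g f       = g o f   for f : X -> Y, g : Y -> Z
  EE C A              = the group E(C,A)
  push C A A' a d     = a_* d        for a : A -> A', d in E(C,A)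
  pull C' C A c d     = c^* d        for c : C' -> C, d in E(C,A)
  rlz C A d B x y     = the sequence A -x-> B -y-> C belongs to s(d)
\<close>

record ('o, 'm, 'e) extri =
  Obj   :: "'o set"
  Hom   :: "'o \<Rightarrow> 'o \<Rightarrow> 'm set"
  cmp   :: "'o \<Rightarrow> 'o \<Rightarrow> 'o \<Rightarrow> 'm \<Rightarrow> 'm \<Rightarrow> 'm"
  idm   :: "'o \<Rightarrow> 'm"
  madd  :: "'o \<Rightarrow> 'o \<Rightarrow> 'm \<Rightarrow> 'm \<Rightarrow> 'm"
  mzero :: "'o \<Rightarrow> 'o \<Rightarrow> 'm"
  EE    :: "'o \<Rightarrow> 'o \<Rightarrow> 'e set"
  eadd  :: "'o \<Rightarrow> 'o \<Rightarrow> 'e \<Rightarrow> 'e \<Rightarrow> 'e"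
  ezero :: "'o \<Rightarrow> 'o \<Rightarrow> 'e"
  push  :: "'o \<Rightarrow> 'o \<Rightarrow> 'o \<Rightarrow> 'm \<Rightarrow> 'e \<Rightarrow> 'e"
  pull  :: "'o \<Rightarrow> 'o \<Rightarrow> 'o \<Rightarrow> 'm \<Rightarrow> 'e \<Rightarrow> 'e"
  rlz   :: "'o \<Rightarrow> 'o \<Rightarrow> 'e \<Rightarrow> 'o \<Rightarrow> 'm \<Rightarrow> 'm \<Rightarrow> bool"

definition abgrp :: "'a set \<Rightarrow> ('a \<Rightarrow> 'a \<Rightarrow> 'a) \<Rightarrow> 'a \<Rightarrow> bool" where
  "abgrp S p z \<longleftrightarrow> z \<in> S \<and> (\<forall>a\<in>S. \<forall>b\<in>S. p a b \<in> S)
     \<and> (\<forall>a\<in>S. \<forall>b\<in>S. \<forall>c\<in>S. p (p a b) c = p a (p b c))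
     \<and> (\<forall>a\<in>S. \<forall>b\<in>S. p a b = p b a)
     \<and> (\<forall>a\<in>S. p z a = a)
     \<and> (\<forall>a\<in>S. \<exists>b\<in>S. p a b = z)"

definition is_category :: "('o,'m,'e,'x) extri_scheme \<Rightarrow> bool" where
  "is_category X \<longleftrightarrow>
     (\<forall>A\<in>Obj X. idm X A \<in> Hom X A A)
   \<and> (\<forall>A\<in>Obj X. \<forall>B\<in>Obj X. \<forall>C\<in>Obj X. \<forall>f\<in>Hom X A B. \<forall>g\<in>Hom X B C.
        cmp X A B C g f \<in> Hom X A C)
   \<and> (\<forall>A\<in>Obj X. \<forall>B\<in>Obj X. \<forall>C\<in>Obj X. \<forall>D\<in>Obj X.
        \<forall>f\<in>Hom X A B. \<forall>g\<in>Hom X B C. \<forall>h\<in>Hom X C D.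
        cmp X A C D h (cmp X A B C g f) = cmp X A B D (cmp X B C D h g) f)
   \<and> (\<forall>A\<in>Obj X. \<forall>B\<in>Obj X. \<forall>f\<in>Hom X A B.
        cmp X A B B (idm X B) f = f \<and> cmp X A A B f (idm X A) = f)"

definition is_biprod :: "('o,'m,'e,'x) extri_scheme \<Rightarrow> 'o \<Rightarrow> 'o \<Rightarrow> 'o \<Rightarrow> 'm \<Rightarrow> 'm \<Rightarrow> 'm \<Rightarrow> 'm \<Rightarrow> bool" where
  "is_biprod X A B P i1 i2 p1 p2 \<longleftrightarrow>
     P \<in> Obj X \<and> i1 \<in> Hom X A P \<and> i2 \<in> Hom X B P \<and> p1 \<in> Hom X P A \<and> p2 \<in> Hom X P B
   \<and> cmp X A P A p1 i1 = idm X A \<and> cmp X B P B p2 i2 = idm X B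
   \<and> cmp X A P B p2 i1 = mzero X A B \<and> cmp X B P A p1 i2 = mzero X B A
   \<and> madd X P P (cmp X P A P i1 p1) (cmp X P B P i2 p2) = idm X P"

definition is_additive :: "('o,'m,'e,'x) extri_scheme \<Rightarrow> bool" where
  "is_additive X \<longleftrightarrow> is_category X
   \<and> (\<forall>A\<in>Obj X. \<forall>B\<in>Obj X. abgrp (Hom X A B) (madd X A B) (mzero X A B))
   \<and> (\<forall>A\<in>Obj X. \<forall>B\<in>Obj X. \<forall>C\<in>Obj X. \<forall>f\<in>Hom X A B. \<forall>f'\<in>Hom X A B. \<forall>g\<in>Hom X B C.
        cmp X A B C g (madd X A B f f') = madd X A C (cmp X A B C g f) (cmp X A B C g f'))
   \<and> (\<forall>A\<in>Obj X. \<forall>B\<in>Obj X. \<forall>C\<in>Obj X. \<forall>f\<in>Hom X A B. \<forall>g\<in>Hom X B C. \<forall>g'\<in>Hom X B C.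
        cmp X A B C (madd X B C g g') f = madd X A C (cmp X A B C g f) (cmp X A B C g' f))
   \<and> (\<exists>Z\<in>Obj X. \<forall>A\<in>Obj X. Hom X A Z = {mzero X A Z} \<and> Hom X Z A = {mzero X Z A})
   \<and> (\<forall>A\<in>Obj X. \<forall>B\<in>Obj X. \<exists>P i1 i2 p1 p2. is_biprod X A B P i1 i2 p1 p2)"

definition iso :: "('o,'m,'e,'x) extri_scheme \<Rightarrow> 'o \<Rightarrow> 'o \<Rightarrow> 'm \<Rightarrow> bool" where
  "iso X A B f \<longleftrightarrow> f \<in> Hom X A B \<and>
     (\<exists>g\<in>Hom X B A. cmp X A B A g f = idm X A \<and> cmp X B A B f g = idm X B)"

section \<open>(ET1): E is a biadditive functor\<close>

definition ET1 :: "('o,'m,'e,'x) extri_scheme \<Rightarrow> bool" where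
  "ET1 X \<longleftrightarrow>
     (\<forall>C\<in>Obj X. \<forall>A\<in>Obj X. abgrp (EE X C A) (eadd X C A) (ezero X C A))
   \<and> (\<forall>C\<in>Obj X. \<forall>A\<in>Obj X. \<forall>A'\<in>Obj X. \<forall>a\<in>Hom X A A'. \<forall>d\<in>EE X C A.
        push X C A A' a d \<in> EE X C A')
   \<and> (\<forall>C'\<in>Obj X. \<forall>C\<in>Obj X. \<forall>A\<in>Obj X. \<forall>c\<in>Hom X C' C. \<forall>d\<in>EE X C A.
        pull X C' C A c d \<in> EE X C' A)
   \<and> (\<forall>C\<in>Obj X. \<forall>A\<in>Obj X. \<forall>A'\<in>Obj X. \<forall>a\<in>Hom X A A'. \<forall>d\<in>EE X C A. \<forall>d'\<in>EE X C A.
        push X C A A' a (eadd X C A d d') = eadd X C A' (push X C A A' a d) (push X C A A' a d'))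
   \<and> (\<forall>C\<in>Obj X. \<forall>A\<in>Obj X. \<forall>A'\<in>Obj X. \<forall>a\<in>Hom X A A'. \<forall>b\<in>Hom X A A'. \<forall>d\<in>EE X C A.
        push X C A A' (madd X A A' a b) d = eadd X C A' (push X C A A' a d) (push X C A A' b d))
   \<and> (\<forall>C'\<in>Obj X. \<forall>C\<in>Obj X. \<forall>A\<in>Obj X. \<forall>c\<in>Hom X C' C. \<forall>d\<in>EE X C A. \<forall>d'\<in>EE X C A.
        pull X C' C A c (eadd X C A d d') = eadd X C' A (pull X C' C A c d) (pull X C' C A c d'))
   \<and> (\<forall>C'\<in>Obj X. \<forall>C\<in>Obj X. \<forall>A\<in>Obj X. \<forall>c\<in>Hom X C' C. \<forall>e\<in>Hom X C' C. \<forall>d\<in>EE X C A.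
        pull X C' C A (madd X C' C c e) d = eadd X C' A (pull X C' C A c d) (pull X C' C A e d))
   \<and> (\<forall>C\<in>Obj X. \<forall>A\<in>Obj X. \<forall>d\<in>EE X C A.
        push X C A A (idm X A) d = d \<and> pull X C C A (idm X C) d = d)
   \<and> (\<forall>C\<in>Obj X. \<forall>A\<in>Obj X. \<forall>A'\<in>Obj X. \<forall>A''\<in>Obj X. \<forall>a\<in>Hom X A A'. \<forall>a'\<in>Hom X A' A''.
        \<forall>d\<in>EE X C A. push X C A A'' (cmp X A A' A'' a' a) d = push X C A' A'' a' (push X C A A' a d))
   \<and> (\<forall>C''\<in>Obj X. \<forall>C'\<in>Obj X. \<forall>C\<in>Obj X. \<forall>A\<in>Obj X. \<forall>c'\<in>Hom X C'' C'. \<forall>c\<in>Hom X C' C.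
        \<forall>d\<in>EE X C A. pull X C'' C A (cmp X C'' C' C c c') d = pull X C'' C' A c' (pull X C' C A c d))
   \<and> (\<forall>C'\<in>Obj X. \<forall>C\<in>Obj X. \<forall>A\<in>Obj X. \<forall>A'\<in>Obj X. \<forall>c\<in>Hom X C' C. \<forall>a\<in>Hom X A A'.
        \<forall>d\<in>EE X C A. push X C' A A' a (pull X C' C A c d) = pull X C' C A' c (push X C A A' a d))"

section \<open>(ET2): s is an additive realization\<close>

definition seq_equiv :: "('o,'m,'e,'x) extri_scheme \<Rightarrow> 'o \<Rightarrow> 'o \<Rightarrow> 'o \<Rightarrow> 'm \<Rightarrow> 'm \<Rightarrow> 'o \<Rightarrow> 'm \<Rightarrow> 'm \<Rightarrow> bool" where
  "seq_equiv X A C B x y B' x' y' \<longleftrightarrow>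
     (\<exists>b. iso X B B' b \<and> cmp X A B B' b x = x' \<and> cmp X B B' C y' b = y)"

text \<open>Morphism (a,b,c) of E-triangles from A -x-> B -y-> C (d) to A' -x'-> B' -y'-> C' (d').\<close>
definition etri_mor :: "('o,'m,'e,'x) extri_scheme \<Rightarrow>
     'o \<Rightarrow> 'o \<Rightarrow> 'e \<Rightarrow> 'o \<Rightarrow> 'm \<Rightarrow> 'm \<Rightarrow> 'o \<Rightarrow> 'o \<Rightarrow> 'e \<Rightarrow> 'o \<Rightarrow> 'm \<Rightarrow> 'm \<Rightarrow>
     'm \<Rightarrow> 'm \<Rightarrow> 'm \<Rightarrow> bool" where
  "etri_mor X C A d B x y C' A' d' B' x' y' a b c \<longleftrightarrow>
     a \<in> Hom X A A' \<and> b \<in> Hom X B B' \<and> c \<in> Hom X C C'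
   \<and> cmp X A B B' b x = cmp X A A' B' x' a
   \<and> cmp X B C C' c y = cmp X B B' C' y' b
   \<and> push X C A A' a d = pull X C C' A' c d'"

definition ET2 :: "('o,'m,'e,'x) extri_scheme \<Rightarrow> bool" where
  "ET2 X \<longleftrightarrow>
     \<comment> \<open>s(d) consists of sequences A -> B -> C for d in E(C,A)\<close>
     (\<forall>C A d B x y. rlz X C A d B x y \<longrightarrow>
        A \<in> Obj X \<and> C \<in> Obj X \<and> d \<in> EE X C A \<and> B \<in> Obj X \<and> x \<in> Hom X A B \<and> y \<in> Hom X B C)
     \<comment> \<open>s(d) is one equivalence class of sequences\<close>
   \<and> (\<forall>C\<in>Obj X. \<forall>A\<in>Obj X. \<forall>d\<in>EE X C A. \<exists>B x y. rlz X C A d B x y)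
   \<and> (\<forall>C A d B x y B' x' y'. rlz X C A d B x y \<and> rlz X C A d B' x' y' \<longrightarrow>
        seq_equiv X A C B x y B' x' y')
   \<and> (\<forall>C A d B x y B' x' y'. rlz X C A d B x y \<and> B' \<in> Obj X \<and> x' \<in> Hom X A B' \<and> y' \<in> Hom X B' C
        \<and> seq_equiv X A C B x y B' x' y' \<longrightarrow> rlz X C A d B' x' y')
     \<comment> \<open>realization condition\<close>
   \<and> (\<forall>C A d B x y C' A' d' B' x' y' a c.
        rlz X C A d B x y \<and> rlz X C' A' d' B' x' y' \<and> a \<in> Hom X A A' \<and> c \<in> Hom X C C'
        \<and> push X C A A' a d = pull X C C' A' c d' \<longrightarrow>
        (\<exists>b. etri_mor X C A d B x y C' A' d' B' x' y' a b c))
     \<comment> \<open>additivity: s(0) is the split sequence\<close>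
   \<and> (\<forall>A\<in>Obj X. \<forall>C\<in>Obj X. \<forall>P i1 i2 p1 p2. is_biprod X A C P i1 i2 p1 p2 \<longrightarrow>
        rlz X C A (ezero X C A) P i1 p2)
     \<comment> \<open>additivity: s(d (+) d') = s(d) (+) s(d')\<close>
   \<and> (\<forall>C A d B x y C' A' d' B' x' y'
        PA iA iA' pA pA' PB iB iB' pB pB' PC iC iC' pC pC'.
        rlz X C A d B x y \<and> rlz X C' A' d' B' x' y'
        \<and> is_biprod X A A' PA iA iA' pA pA'
        \<and> is_biprod X B B' PB iB iB' pB pB'
        \<and> is_biprod X C C' PC iC iC' pC pC' \<longrightarrow>
        rlz X PC PA
          (eadd X PC PA (push X PC A PA iA (pull X PC C A pC d))
                        (push X PC A' PA iA' (pull X PC C' A' pC' d')))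
          PB
          (madd X PA PB (cmp X PA B PB iB (cmp X PA A B x pA))
                        (cmp X PA B' PB iB' (cmp X PA A' B' x' pA')))
          (madd X PB PC (cmp X PB C PC iC (cmp X PB B C y pB))
                        (cmp X PB C' PC iC' (cmp X PB B' C' y' pB'))))"

definition ET3 :: "('o,'m,'e,'x) extri_scheme \<Rightarrow> bool" where
  "ET3 X \<longleftrightarrow>
     (\<forall>C A d B x y C' A' d' B' x' y' a b.
        rlz X C A d B x y \<and> rlz X C' A' d' B' x' y' \<and> a \<in> Hom X A A' \<and> b \<in> Hom X B B'
        \<and> cmp X A B B' b x = cmp X A A' B' x' a \<longrightarrow>
        (\<exists>c. etri_mor X C A d B x y C' A' d' B' x' y' a b c))"

definition ET3op :: "('o,'m,'e,'x) extri_scheme \<Rightarrow> bool" where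
  "ET3op X \<longleftrightarrow>
     (\<forall>C A d B x y C' A' d' B' x' y' b c.
        rlz X C A d B x y \<and> rlz X C' A' d' B' x' y' \<and> b \<in> Hom X B B' \<and> c \<in> Hom X C C'
        \<and> cmp X B C C' c y = cmp X B B' C' y' b \<longrightarrow>
        (\<exists>a. etri_mor X C A d B x y C' A' d' B' x' y' a b c))"

definition ET4 :: "('o,'m,'e,'x) extri_scheme \<Rightarrow> bool" where
  "ET4 X \<longleftrightarrow>
     (\<forall>A B D C F f f' g g' d d'.
        rlz X D A d B f f' \<and> rlz X F B d' C g g' \<longrightarrow>
        (\<exists>E h h' dd e d''. E \<in> Obj X \<and> dd \<in> Hom X D E \<and> e \<in> Hom X E F
           \<and> h = cmp X A B C g f
           \<and> rlz X E A d'' C h h'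
           \<and> cmp X B D E dd f' = cmp X B C E h' g
           \<and> cmp X C E F e h' = g'
           \<and> rlz X F D (push X F B D f' d') E dd e
           \<and> pull X D E A dd d'' = d
           \<and> push X E A B f d'' = pull X E F B e d'))"

definition ET4op :: "('o,'m,'e,'x) extri_scheme \<Rightarrow> bool" where
  "ET4op X \<longleftrightarrow>
     (\<forall>D A B F C f' f g' g d d'.
        rlz X B D d A f' f \<and> rlz X C F d' B g' g \<longrightarrow>
        (\<exists>E h h' dd e d''. E \<in> Obj X \<and> dd \<in> Hom X D E \<and> e \<in> Hom X E F
           \<and> h = cmp X A B C g f
           \<and> rlz X C E d'' A h' h
           \<and> cmp X D E A h' dd = f'
           \<and> cmp X E A B f h' = cmp X E F B g' e
           \<and> rlz X F D (pull X F B D g' d) E dd e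
           \<and> d' = push X C E F e d''
           \<and> push X B D E dd d = pull X B C E g d''))"

definition extriangulated :: "('o,'m,'e,'x) extri_scheme \<Rightarrow> bool" where
  "extriangulated X \<longleftrightarrow> is_additive X \<and> ET1 X \<and> ET2 X \<and> ET3 X \<and> ET3op X \<and> ET4 X \<and> ET4op X"

definition ideal :: "('o,'m,'e,'x) extri_scheme \<Rightarrow> ('o \<Rightarrow> 'o \<Rightarrow> 'm set) \<Rightarrow> bool" where
  "ideal X I \<longleftrightarrow>
     (\<forall>A\<in>Obj X. \<forall>B\<in>Obj X. I A B \<subseteq> Hom X A B \<and> mzero X A B \<in> I A B
        \<and> (\<forall>f\<in>I A B. \<forall>g\<in>I A B. madd X A B f g \<in> I A B))
   \<and> (\<forall>W\<in>Obj X. \<forall>A\<in>Obj X. \<forall>B\<in>Obj X. \<forall>Z\<in>Obj X. \<forall>f\<in>I A B. \<forall>u\<in>Hom X W A. \<forall>v\<in>Hom X B Z.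
        cmp X W B Z v (cmp X W A B f u) \<in> I W Z)"

definition add_subfunctor :: "('o,'m,'e,'x) extri_scheme \<Rightarrow> ('o \<Rightarrow> 'o \<Rightarrow> 'e set) \<Rightarrow> bool" where
  "add_subfunctor X F \<longleftrightarrow>
     (\<forall>C\<in>Obj X. \<forall>A\<in>Obj X. F C A \<subseteq> EE X C A \<and> ezero X C A \<in> F C A
        \<and> (\<forall>d\<in>F C A. \<forall>d'\<in>F C A. eadd X C A d d' \<in> F C A)
        \<and> (\<forall>d\<in>F C A. \<exists>d'\<in>F C A. eadd X C A d d' = ezero X C A))
   \<and> (\<forall>C\<in>Obj X. \<forall>A\<in>Obj X. \<forall>A'\<in>Obj X. \<forall>a\<in>Hom X A A'. \<forall>d\<in>F C A. push X C A A' a d \<in> F C A')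
   \<and> (\<forall>C'\<in>Obj X. \<forall>C\<in>Obj X. \<forall>A\<in>Obj X. \<forall>c\<in>Hom X C' C. \<forall>d\<in>F C A. pull X C' C A c d \<in> F C' A)"

definition Ph :: "('o,'m,'e,'x) extri_scheme \<Rightarrow> ('o \<Rightarrow> 'o \<Rightarrow> 'e set) \<Rightarrow> 'o \<Rightarrow> 'o \<Rightarrow> 'm set" where
  "Ph X F W C = {\<phi> \<in> Hom X W C. \<forall>A\<in>Obj X. \<forall>d\<in>EE X C A. pull X W C A \<phi> d \<in> F W A}"

definition Finj :: "('o,'m,'e,'x) extri_scheme \<Rightarrow> ('o \<Rightarrow> 'o \<Rightarrow> 'e set) \<Rightarrow> 'o \<Rightarrow> 'o \<Rightarrow> 'm set" where
  "Finj X F A Y = {i \<in> Hom X A Y. \<forall>C\<in>Obj X. \<forall>d\<in>F C A. push X C A Y i d = ezero X C Y}"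

definition F_injective :: "('o,'m,'e,'x) extri_scheme \<Rightarrow> ('o \<Rightarrow> 'o \<Rightarrow> 'e set) \<Rightarrow> 'o \<Rightarrow> bool" where
  "F_injective X F B \<longleftrightarrow> B \<in> Obj X \<and> idm X B \<in> Finj X F B B"

definition F_enough_inj :: "('o,'m,'e,'x) extri_scheme \<Rightarrow> ('o \<Rightarrow> 'o \<Rightarrow> 'e set) \<Rightarrow> bool" where
  "F_enough_inj X F \<longleftrightarrow>
     (\<forall>A\<in>Obj X. \<exists>B e C y d. rlz X C A d B e y \<and> d \<in> F C A \<and> F_injective X F B)"

definition F_enough_special_inj :: "('o,'m,'e,'x) extri_scheme \<Rightarrow> ('o \<Rightarrow> 'o \<Rightarrow> 'e set) \<Rightarrow> bool" where
  "F_enough_special_inj X F \<longleftrightarrow>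
     (\<forall>A\<in>Obj X. \<exists>B e C y d B' x' C' y' d' b \<phi>.
        rlz X C A d B e y \<and> d \<in> F C A \<and> F_injective X F B
        \<and> rlz X C' A d' B' x' y'
        \<and> etri_mor X C A d B e y C' A d' B' x' y' (idm X A) b \<phi>
        \<and> \<phi> \<in> Ph X F C C')"

definition Istar :: "('o,'m,'e,'x) extri_scheme \<Rightarrow> ('o \<Rightarrow> 'o \<Rightarrow> 'm set) \<Rightarrow> 'o \<Rightarrow> 'o \<Rightarrow> 'e set" where
  "Istar X I W A = {pull X W C A i d | C i d. C \<in> Obj X \<and> i \<in> I W C \<and> d \<in> EE X C A}"

definition Iperp :: "('o,'m,'e,'x) extri_scheme \<Rightarrow> ('o \<Rightarrow> 'o \<Rightarrow> 'm set) \<Rightarrow> 'o \<Rightarrow> 'o \<Rightarrow> 'm set" where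
  "Iperp X I A Y = {g \<in> Hom X A Y. \<forall>W\<in>Obj X. \<forall>C\<in>Obj X. \<forall>m\<in>I W C. \<forall>d\<in>EE X C A.
       pull X W C Y m (push X C A Y g d) = ezero X W Y}"

definition ObK :: "('o,'m,'e,'x) extri_scheme \<Rightarrow> ('o \<Rightarrow> 'o \<Rightarrow> 'm set) \<Rightarrow> 'o set" where
  "ObK X K = {A \<in> Obj X. idm X A \<in> K A A}"

definition gen_ideal :: "('o,'m,'e,'x) extri_scheme \<Rightarrow> ('o \<Rightarrow> 'o \<Rightarrow> 'm set) \<Rightarrow> 'o \<Rightarrow> 'o \<Rightarrow> 'm set" where
  "gen_ideal X K A B = {f. \<forall>J. ideal X J \<and> (\<forall>P\<in>Obj X. \<forall>Q\<in>Obj X. K P Q \<subseteq> J P Q) \<longrightarrow> f \<in> J A B}"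

definition object_ideal :: "('o,'m,'e,'x) extri_scheme \<Rightarrow> ('o \<Rightarrow> 'o \<Rightarrow> 'm set) \<Rightarrow> bool" where
  "object_ideal X K \<longleftrightarrow>
     (\<forall>A\<in>Obj X. \<forall>B\<in>Obj X.
        K A B = gen_ideal X (\<lambda>P Q. if P = Q \<and> P \<in> ObK X K then {idm X P} else {}) A B)"

definition special_precover :: "('o,'m,'e,'x) extri_scheme \<Rightarrow> ('o \<Rightarrow> 'o \<Rightarrow> 'm set) \<Rightarrow> 'o \<Rightarrow> 'o \<Rightarrow> 'm \<Rightarrow> bool" where
  "special_precover X I C W i \<longleftrightarrow> i \<in> I W C \<and>
     (\<exists>A B x y d A' x' d' j b.
        rlz X C A d B x y \<and> rlz X C A' d' W x' i
        \<and> etri_mor X C A d B x y C A' d' W x' i j b (idm X C)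
        \<and> j \<in> Iperp X I A A')"

definition obj_special_precover :: "('o,'m,'e,'x) extri_scheme \<Rightarrow> ('o \<Rightarrow> 'o \<Rightarrow> 'm set) \<Rightarrow> 'o \<Rightarrow> 'o \<Rightarrow> 'm \<Rightarrow> bool" where
  "obj_special_precover X I C W i \<longleftrightarrow> i \<in> I W C \<and>
     (\<exists>A x d. rlz X C A d W x i \<and> A \<in> ObK X (Iperp X I))"

definition special_precovering :: "('o,'m,'e,'x) extri_scheme \<Rightarrow> ('o \<Rightarrow> 'o \<Rightarrow> 'm set) \<Rightarrow> bool" where
  "special_precovering X I \<longleftrightarrow> (\<forall>C\<in>Obj X. \<exists>W i. special_precover X I C W i)"

definition obj_special_precovering :: "('o,'m,'e,'x) extri_scheme \<Rightarrow> ('o \<Rightarrow> 'o \<Rightarrow> 'm set) \<Rightarrow> bool" where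
  "obj_special_precovering X I \<longleftrightarrow> (\<forall>C\<in>Obj X. \<exists>W i. obj_special_precover X I C W i)"

definition enough_inj_objects :: "('o,'m,'e,'x) extri_scheme \<Rightarrow> bool" where
  "enough_inj_objects X \<longleftrightarrow>
     (\<forall>A\<in>Obj X. \<exists>E x C y d. rlz X C A d E x y \<and> (\<forall>Z\<in>Obj X. EE X Z E = {ezero X Z E}))"

definition enough_proj_morphisms :: "('o,'m,'e,'x) extri_scheme \<Rightarrow> bool" where
  "enough_proj_morphisms X \<longleftrightarrow>
     (\<forall>C\<in>Obj X. \<exists>K P x p g. rlz X C K g P x p
        \<and> (\<forall>A\<in>Obj X. \<forall>d\<in>EE X C A. pull X P C A p d = ezero X P A))"

definition cond_a :: "('o,'m,'e,'x) extri_scheme \<Rightarrow> ('o \<Rightarrow> 'o \<Rightarrow> 'm set) \<Rightarrow> bool" where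
  "cond_a X I \<longleftrightarrow> (\<exists>F. add_subfunctor X F \<and> F_enough_inj X F
      \<and> (\<forall>A\<in>Obj X. \<forall>B\<in>Obj X. I A B = Ph X F A B))"

definition cond_a' :: "('o,'m,'e,'x) extri_scheme \<Rightarrow> ('o \<Rightarrow> 'o \<Rightarrow> 'm set) \<Rightarrow> bool" where
  "cond_a' X I \<longleftrightarrow> (\<exists>F. add_subfunctor X F \<and> F_enough_special_inj X F
      \<and> (\<forall>A\<in>Obj X. \<forall>B\<in>Obj X. I A B = Ph X F A B))"

definition cond_b :: "('o,'m,'e,'x) extri_scheme \<Rightarrow> ('o \<Rightarrow> 'o \<Rightarrow> 'm set) \<Rightarrow> bool" where
  "cond_b X I \<longleftrightarrow> obj_special_precovering X I"

definition cond_c :: "('o,'m,'e,'x) extri_scheme \<Rightarrow> ('o \<Rightarrow> 'o \<Rightarrow> 'm set) \<Rightarrow> bool" where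
  "cond_c X I \<longleftrightarrow> F_enough_special_inj X (Istar X I)
      \<and> (\<forall>A\<in>Obj X. \<forall>B\<in>Obj X. I A B = Ph X (Istar X I) A B)"

definition cond_d :: "('o,'m,'e,'x) extri_scheme \<Rightarrow> ('o \<Rightarrow> 'o \<Rightarrow> 'm set) \<Rightarrow> bool" where
  "cond_d X I \<longleftrightarrow> special_precovering X I \<and> object_ideal X (Iperp X I)"

end

theory Submission
  imports Defs
begin

text \<open>
  Every implication is a diagram chase with E-triangles, driven by the exactness of the
  sequences of Hom- and E-groups attached to a conflation.
  (I) Push a conflation K \<rightarrow> P \<rightarrow> C whose deflation is a projective morphism
  along an F-inflation K \<rightarrow> B0 into an F-injective object: the new deflation W \<rightarrow> C
  is an F-phantom, and F-injective objects are orthogonal to Ph(F).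
  (II) Splice a conflation A \<rightarrow> E \<rightarrow> C' with E injective and an object-special precover
  K \<rightarrow> X0 \<rightarrow> C' by (ET4)op. This yields a split conflation K \<rightarrow> E0 \<rightarrow> A whose
  retraction can be chosen to push the octahedral extension back to the one of the precover;
  (ET4) then produces an I*-inflation A \<rightarrow> B into an I*-injective object, compared with
  A \<rightarrow> E \<rightarrow> C' by a morphism lying in I.
  (III) A morphism in the orthogonal of I factors through an I*-injective envelope, an object of
  that orthogonal.
  (IV) Push a special precover along a factorisation of its comparison map through an object
  orthogonal to I.
  (V) I* is an additive subfunctor of E.
\<close>

lemma abgrp_closed: "abgrp S p z \<Longrightarrow> a \<in> S \<Longrightarrow> b \<in> S \<Longrightarrow> p a b \<in> S"
  unfolding abgrp_def by blast

lemma abgrp_zero: "abgrp S p z \<Longrightarrow> z \<in> S"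
  unfolding abgrp_def by blast

lemma abgrp_assoc: "abgrp S p z \<Longrightarrow> a \<in> S \<Longrightarrow> b \<in> S \<Longrightarrow> c \<in> S \<Longrightarrow> p (p a b) c = p a (p b c)"
  unfolding abgrp_def by (elim conjE) (drule bspec, assumption)+

lemma abgrp_comm: "abgrp S p z \<Longrightarrow> a \<in> S \<Longrightarrow> b \<in> S \<Longrightarrow> p a b = p b a"
  unfolding abgrp_def by (elim conjE) (drule bspec, assumption)+

lemma abgrp_zero_left: "abgrp S p z \<Longrightarrow> a \<in> S \<Longrightarrow> p z a = a"
  unfolding abgrp_def by (elim conjE) (drule bspec, assumption)+

lemma abgrp_inverse: "abgrp S p z \<Longrightarrow> a \<in> S \<Longrightarrow> \<exists>b \<in> S. p a b = z"
  unfolding abgrp_def by (elim conjE) (drule bspec, assumption)+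

lemma abgrp_zero_right: "abgrp S p z \<Longrightarrow> a \<in> S \<Longrightarrow> p a z = a"
  using abgrp_comm[of S p z a z] abgrp_zero_left[of S p z a] abgrp_zero[of S p z] by simp

lemma abgrp_left_cancel:
  assumes G: "abgrp S p z" and S: "a \<in> S" "b \<in> S" "c \<in> S" and e: "p a b = p a c"
  shows "b = c"
proof -
  obtain a' where a': "a' \<in> S" "p a' a = z"
    using abgrp_inverse[OF G S(1)] abgrp_comm[OF G] S(1) by metis
  have "b = p (p a' a) b" using a' abgrp_zero_left[OF G S(2)] by simp
  also have "\<dots> = p (p a' a) c" using abgrp_assoc[OF G] a'(1) S e by simp
  also have "\<dots> = c" using a' abgrp_zero_left[OF G S(3)] by simp
  finally show ?thesis .
qed

lemma abgrp_idem_zero: "abgrp S p z \<Longrightarrow> a \<in> S \<Longrightarrow> p a a = a \<Longrightarrow> a = z"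
  using abgrp_left_cancel[of S p z a a z] abgrp_zero_right abgrp_zero by metis

lemma abgrp_inverse_unique:
  "abgrp S p z \<Longrightarrow> a \<in> S \<Longrightarrow> b \<in> S \<Longrightarrow> m \<in> S \<Longrightarrow> p a m = z \<Longrightarrow> p b m = z \<Longrightarrow> a = b"
  using abgrp_left_cancel[of S p z m a b] abgrp_comm by metis

locale extri_category =
  fixes X :: "('o, 'm, 'e) extri"
  assumes extriangulated: "extriangulated X"
begin

lemma additive: "is_additive X" using extriangulated unfolding extriangulated_def by simp
lemma category: "is_category X" using additive unfolding is_additive_def by (elim conjE) simp
lemma et1: "ET1 X" using extriangulated unfolding extriangulated_def by simp
lemma et2: "ET2 X" using extriangulated unfolding extriangulated_def by simp
lemma et3: "ET3 X" using extriangulated unfolding extriangulated_def by simp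
lemma et3op: "ET3op X" using extriangulated unfolding extriangulated_def by simp
lemma et4: "ET4 X" using extriangulated unfolding extriangulated_def by simp
lemma et4op: "ET4op X" using extriangulated unfolding extriangulated_def by simp

lemma id_hom [simp]: "A \<in> Obj X \<Longrightarrow> idm X A \<in> Hom X A A"
  using category unfolding is_category_def by (elim conjE) simp

lemma comp_hom [simp]:
  "A \<in> Obj X \<Longrightarrow> B \<in> Obj X \<Longrightarrow> C \<in> Obj X \<Longrightarrow> f \<in> Hom X A B \<Longrightarrow> g \<in> Hom X B C
    \<Longrightarrow> cmp X A B C g f \<in> Hom X A C"
  using category unfolding is_category_def by (elim conjE) simp

lemma comp_assoc:
  "A \<in> Obj X \<Longrightarrow> B \<in> Obj X \<Longrightarrow> C \<in> Obj X \<Longrightarrow> D \<in> Obj X \<Longrightarrow> f \<in> Hom X A B \<Longrightarrow> g \<in> Hom X B C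
    \<Longrightarrow> h \<in> Hom X C D \<Longrightarrow> cmp X A C D h (cmp X A B C g f) = cmp X A B D (cmp X B C D h g) f"
  using category unfolding is_category_def by (elim conjE) simp

lemma comp_id_left [simp]:
  "A \<in> Obj X \<Longrightarrow> B \<in> Obj X \<Longrightarrow> f \<in> Hom X A B \<Longrightarrow> cmp X A B B (idm X B) f = f"
  using category unfolding is_category_def by (elim conjE) simp

lemma comp_id_right [simp]:
  "A \<in> Obj X \<Longrightarrow> B \<in> Obj X \<Longrightarrow> f \<in> Hom X A B \<Longrightarrow> cmp X A A B f (idm X A) = f"
  using category unfolding is_category_def by (elim conjE) simp

lemma hom_abgrp: "A \<in> Obj X \<Longrightarrow> B \<in> Obj X \<Longrightarrow> abgrp (Hom X A B) (madd X A B) (mzero X A B)"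
  using additive unfolding is_additive_def by (elim conjE) simp

lemma mzero_hom [simp]: "A \<in> Obj X \<Longrightarrow> B \<in> Obj X \<Longrightarrow> mzero X A B \<in> Hom X A B"
  by (rule abgrp_zero[OF hom_abgrp])

lemma madd_hom [simp]:
  "A \<in> Obj X \<Longrightarrow> B \<in> Obj X \<Longrightarrow> f \<in> Hom X A B \<Longrightarrow> g \<in> Hom X A B \<Longrightarrow> madd X A B f g \<in> Hom X A B"
  by (rule abgrp_closed[OF hom_abgrp])

lemma madd_zero_left [simp]:
  "A \<in> Obj X \<Longrightarrow> B \<in> Obj X \<Longrightarrow> f \<in> Hom X A B \<Longrightarrow> madd X A B (mzero X A B) f = f"
  by (rule abgrp_zero_left[OF hom_abgrp])

lemma madd_zero_right [simp]:
  "A \<in> Obj X \<Longrightarrow> B \<in> Obj X \<Longrightarrow> f \<in> Hom X A B \<Longrightarrow> madd X A B f (mzero X A B) = f"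
  by (rule abgrp_zero_right[OF hom_abgrp])

lemma madd_inverse:
  "A \<in> Obj X \<Longrightarrow> B \<in> Obj X \<Longrightarrow> f \<in> Hom X A B \<Longrightarrow> \<exists>n \<in> Hom X A B. madd X A B f n = mzero X A B"
  by (rule abgrp_inverse[OF hom_abgrp])

lemma comp_madd_right:
  "A \<in> Obj X \<Longrightarrow> B \<in> Obj X \<Longrightarrow> C \<in> Obj X \<Longrightarrow> f \<in> Hom X A B \<Longrightarrow> f' \<in> Hom X A B \<Longrightarrow> g \<in> Hom X B C
    \<Longrightarrow> cmp X A B C g (madd X A B f f') = madd X A C (cmp X A B C g f) (cmp X A B C g f')"
  using additive unfolding is_additive_def by (elim conjE) simp

lemma comp_madd_left:
  "A \<in> Obj X \<Longrightarrow> B \<in> Obj X \<Longrightarrow> C \<in> Obj X \<Longrightarrow> f \<in> Hom X A B \<Longrightarrow> g \<in> Hom X B C \<Longrightarrow> g' \<in> Hom X B C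
    \<Longrightarrow> cmp X A B C (madd X B C g g') f = madd X A C (cmp X A B C g f) (cmp X A B C g' f)"
  using additive unfolding is_additive_def by (elim conjE) simp

lemma comp_zero_right [simp]:
  assumes "A \<in> Obj X" "B \<in> Obj X" "C \<in> Obj X" "g \<in> Hom X B C"
  shows "cmp X A B C g (mzero X A B) = mzero X A C"
proof -
  have "cmp X A B C g (mzero X A B)
      = madd X A C (cmp X A B C g (mzero X A B)) (cmp X A B C g (mzero X A B))"
    using comp_madd_right[of A B C "mzero X A B" "mzero X A B" g] assms by simp
  then show ?thesis using abgrp_idem_zero[OF hom_abgrp[of A C]] assms by simp
qed

lemma comp_zero_left [simp]:
  assumes "A \<in> Obj X" "B \<in> Obj X" "C \<in> Obj X" "f \<in> Hom X A B"
  shows "cmp X A B C (mzero X B C) f = mzero X A C"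
proof -
  have "cmp X A B C (mzero X B C) f
      = madd X A C (cmp X A B C (mzero X B C) f) (cmp X A B C (mzero X B C) f)"
    using comp_madd_left[of A B C f "mzero X B C" "mzero X B C"] assms by simp
  then show ?thesis using abgrp_idem_zero[OF hom_abgrp[of A C]] assms by simp
qed

lemma zero_object_exists:
  "\<exists>Z \<in> Obj X. \<forall>A \<in> Obj X. Hom X A Z = {mzero X A Z} \<and> Hom X Z A = {mzero X Z A}"
  using additive unfolding is_additive_def by (elim conjE) simp

lemma biprod_exists: "A \<in> Obj X \<Longrightarrow> B \<in> Obj X \<Longrightarrow> \<exists>P i1 i2 p1 p2. is_biprod X A B P i1 i2 p1 p2"
  using additive unfolding is_additive_def by (elim conjE) simp

lemma biprodD:
  "is_biprod X A B P i1 i2 p1 p2 \<Longrightarrow>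
     P \<in> Obj X \<and> i1 \<in> Hom X A P \<and> i2 \<in> Hom X B P \<and> p1 \<in> Hom X P A \<and> p2 \<in> Hom X P B
   \<and> cmp X A P A p1 i1 = idm X A \<and> cmp X B P B p2 i2 = idm X B
   \<and> cmp X A P B p2 i1 = mzero X A B \<and> cmp X B P A p1 i2 = mzero X B A
   \<and> madd X P P (cmp X P A P i1 p1) (cmp X P B P i2 p2) = idm X P"
  unfolding is_biprod_def by simp

lemma comp_through_biprod:
  assumes bp: "is_biprod X K K' P i1 i2 p1 p2"
    and o: "A \<in> Obj X" "B \<in> Obj X" and ok: "K \<in> Obj X" "K' \<in> Obj X"
    and h: "u \<in> Hom X A K" "u' \<in> Hom X A K'" "v \<in> Hom X K B" "v' \<in> Hom X K' B"
  shows "cmp X A P B (madd X P B (cmp X P K B v p1) (cmp X P K' B v' p2))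
           (madd X A P (cmp X A K P i1 u) (cmp X A K' P i2 u'))
         = madd X A B (cmp X A K B v u) (cmp X A K' B v' u')"
    (is "cmp X A P B ?V ?U = _")
proof -
  note b = biprodD[OF bp]
  have VH: "?V \<in> Hom X P B" using o ok b h by simp
  have V1: "cmp X K P B ?V i1 = v"
  proof -
    have "cmp X K P B ?V i1
        = madd X K B (cmp X K P B (cmp X P K B v p1) i1) (cmp X K P B (cmp X P K' B v' p2) i1)"
      by (rule comp_madd_left) (simp_all add: o ok b h)
    also have "cmp X K P B (cmp X P K B v p1) i1 = cmp X K K B v (cmp X K P K p1 i1)"
      by (rule comp_assoc[symmetric]) (simp_all add: o ok b h)
    also have "cmp X K P B (cmp X P K' B v' p2) i1 = cmp X K K' B v' (cmp X K P K' p2 i1)"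
      by (rule comp_assoc[symmetric]) (simp_all add: o ok b h)
    finally show ?thesis using o ok b h by simp
  qed
  have V2: "cmp X K' P B ?V i2 = v'"
  proof -
    have "cmp X K' P B ?V i2
        = madd X K' B (cmp X K' P B (cmp X P K B v p1) i2) (cmp X K' P B (cmp X P K' B v' p2) i2)"
      by (rule comp_madd_left) (simp_all add: o ok b h)
    also have "cmp X K' P B (cmp X P K B v p1) i2 = cmp X K' K B v (cmp X K' P K p1 i2)"
      by (rule comp_assoc[symmetric]) (simp_all add: o ok b h)
    also have "cmp X K' P B (cmp X P K' B v' p2) i2 = cmp X K' K' B v' (cmp X K' P K' p2 i2)"
      by (rule comp_assoc[symmetric]) (simp_all add: o ok b h)
    finally show ?thesis using o ok b h by simp
  qed
  have "cmp X A P B ?V ?U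
      = madd X A B (cmp X A P B ?V (cmp X A K P i1 u)) (cmp X A P B ?V (cmp X A K' P i2 u'))"
    by (rule comp_madd_right) (simp_all add: o ok b h VH)
  also have "cmp X A P B ?V (cmp X A K P i1 u) = cmp X A K B (cmp X K P B ?V i1) u"
    by (rule comp_assoc) (simp_all add: o ok b h VH)
  also have "cmp X A P B ?V (cmp X A K' P i2 u') = cmp X A K' B (cmp X K' P B ?V i2) u'"
    by (rule comp_assoc) (simp_all add: o ok b h VH)
  finally show ?thesis using V1 V2 by simp
qed

lemma jointly_mono_fixing_is_id:
  assumes o: "A \<in> Obj X" "K \<in> Obj X" "E \<in> Obj X"
    and h: "ee \<in> Hom X E A" "t \<in> Hom X E K" "Q \<in> Hom X E E"
    and eQ: "cmp X E E A ee Q = ee" and tQ: "cmp X E E K t Q = t"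
    and jointly_mono: "\<And>u. u \<in> Hom X E E \<Longrightarrow> cmp X E E A ee u = mzero X E A
                          \<Longrightarrow> cmp X E E K t u = mzero X E K \<Longrightarrow> u = mzero X E E"
  shows "Q = idm X E"
proof -
  obtain m where m: "m \<in> Hom X E E" "madd X E E Q m = mzero X E E"
    using madd_inverse[OF o(3) o(3) h(3)] by blast
  have "madd X E A ee (cmp X E E A ee m) = cmp X E E A ee (madd X E E Q m)"
    using comp_madd_right[of E E A Q m ee] eQ o h m by simp
  then have "cmp X E E A ee (madd X E E (idm X E) m) = mzero X E A"
    using comp_madd_right[of E E A "idm X E" m ee] o h m by simp
  moreover have "madd X E K t (cmp X E E K t m) = cmp X E E K t (madd X E E Q m)"
    using comp_madd_right[of E E K Q m t] tQ o h m by simp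
  then have "cmp X E E K t (madd X E E (idm X E) m) = mzero X E K"
    using comp_madd_right[of E E K "idm X E" m t] o h m by simp
  ultimately have "madd X E E (idm X E) m = mzero X E E"
    using jointly_mono o m by simp
  then show "Q = idm X E"
    using abgrp_inverse_unique[OF hom_abgrp[OF o(3) o(3)], of Q "idm X E" m] h m o by simp
qed

lemma biprod_of_split_pair:
  assumes o: "A \<in> Obj X" "K \<in> Obj X" "E \<in> Obj X"
    and h: "dd \<in> Hom X K E" "ee \<in> Hom X E A" "s \<in> Hom X A E" "t \<in> Hom X E K"
    and es: "cmp X A E A ee s = idm X A" and td: "cmp X K E K t dd = idm X K"
    and ts: "cmp X A E K t s = mzero X A K" and ed: "cmp X K E A ee dd = mzero X K A"
    and jointly_mono: "\<And>u. u \<in> Hom X E E \<Longrightarrow> cmp X E E A ee u = mzero X E A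
                          \<Longrightarrow> cmp X E E K t u = mzero X E K \<Longrightarrow> u = mzero X E E"
  shows "is_biprod X A K E s dd ee t"
proof -
  define Q where "Q = madd X E E (cmp X E A E s ee) (cmp X E K E dd t)"
  have QH: "Q \<in> Hom X E E" unfolding Q_def using o h by simp
  have "cmp X E E A ee Q = ee"
  proof -
    have "cmp X E E A ee Q = madd X E A (cmp X E E A ee (cmp X E A E s ee)) (cmp X E E A ee (cmp X E K E dd t))"
      unfolding Q_def by (rule comp_madd_right) (use o h in simp_all)
    also have "cmp X E E A ee (cmp X E A E s ee) = cmp X E A A (cmp X A E A ee s) ee"
      by (rule comp_assoc) (use o h in simp_all)
    also have "cmp X E E A ee (cmp X E K E dd t) = cmp X E K A (cmp X K E A ee dd) t"
      by (rule comp_assoc) (use o h in simp_all)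
    finally show ?thesis using es ed o h by simp
  qed
  moreover have "cmp X E E K t Q = t"
  proof -
    have "cmp X E E K t Q = madd X E K (cmp X E E K t (cmp X E A E s ee)) (cmp X E E K t (cmp X E K E dd t))"
      unfolding Q_def by (rule comp_madd_right) (use o h in simp_all)
    also have "cmp X E E K t (cmp X E A E s ee) = cmp X E A K (cmp X A E K t s) ee"
      by (rule comp_assoc) (use o h in simp_all)
    also have "cmp X E E K t (cmp X E K E dd t) = cmp X E K K (cmp X K E K t dd) t"
      by (rule comp_assoc) (use o h in simp_all)
    finally show ?thesis using ts td o h by simp
  qed
  ultimately have "Q = idm X E"
    using jointly_mono_fixing_is_id[OF o h(2,4) QH _ _ jointly_mono] by blast
  then show ?thesis unfolding is_biprod_def Q_def using o h es td ts ed by blast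
qed

lemma section_killed_by_retraction:
  assumes o: "A \<in> Obj X" "K \<in> Obj X" "E \<in> Obj X"
    and h: "dd \<in> Hom X K E" "ee \<in> Hom X E A" "s0 \<in> Hom X A E" "t \<in> Hom X E K"
    and es0: "cmp X A E A ee s0 = idm X A" and td: "cmp X K E K t dd = idm X K"
    and ed: "cmp X K E A ee dd = mzero X K A"
  obtains s where "s \<in> Hom X A E" "cmp X A E A ee s = idm X A" "cmp X A E K t s = mzero X A K"
proof -
  define q where "q = cmp X A K E dd (cmp X A E K t s0)"
  have q: "q \<in> Hom X A E" unfolding q_def using o h by simp
  obtain n where n: "n \<in> Hom X A E" "madd X A E q n = mzero X A E"
    using madd_inverse[OF o(1) o(3) q] by blast
  have eq: "cmp X A E A ee q = mzero X A A"
  proof -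
    have "cmp X A E A ee q = cmp X A K A (cmp X K E A ee dd) (cmp X A E K t s0)"
      unfolding q_def by (rule comp_assoc) (use o h in simp_all)
    then show ?thesis using ed o h by simp
  qed
  have tq: "cmp X A E K t q = cmp X A E K t s0"
  proof -
    have "cmp X A E K t q = cmp X A K K (cmp X K E K t dd) (cmp X A E K t s0)"
      unfolding q_def by (rule comp_assoc) (use o h in simp_all)
    then show ?thesis using td o h by simp
  qed
  have en: "cmp X A E A ee n = mzero X A A"
    using comp_madd_right[of A E A q n ee] eq n o h q by simp
  have tn: "madd X A K (cmp X A E K t s0) (cmp X A E K t n) = mzero X A K"
    using comp_madd_right[of A E K q n t] tq n o h q by simp
  show ?thesis
  proof
    show "madd X A E s0 n \<in> Hom X A E" using o h n by simp
    show "cmp X A E A ee (madd X A E s0 n) = idm X A"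
      using comp_madd_right[of A E A s0 n ee] es0 en o h n by simp
    show "cmp X A E K t (madd X A E s0 n) = mzero X A K"
      using comp_madd_right[of A E K s0 n t] tn o h n by simp
  qed
qed

lemma ext_abgrp: "C \<in> Obj X \<Longrightarrow> A \<in> Obj X \<Longrightarrow> abgrp (EE X C A) (eadd X C A) (ezero X C A)"
  using et1[unfolded ET1_def, THEN conjunct1] by blast

lemma ezero_ext [simp]: "C \<in> Obj X \<Longrightarrow> A \<in> Obj X \<Longrightarrow> ezero X C A \<in> EE X C A"
  by (rule abgrp_zero[OF ext_abgrp])

lemma eadd_ext [simp]:
  "C \<in> Obj X \<Longrightarrow> A \<in> Obj X \<Longrightarrow> d \<in> EE X C A \<Longrightarrow> d' \<in> EE X C A \<Longrightarrow> eadd X C A d d' \<in> EE X C A"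
  by (rule abgrp_closed[OF ext_abgrp])

lemma eadd_zero_left [simp]:
  "C \<in> Obj X \<Longrightarrow> A \<in> Obj X \<Longrightarrow> d \<in> EE X C A \<Longrightarrow> eadd X C A (ezero X C A) d = d"
  by (rule abgrp_zero_left[OF ext_abgrp])

lemma eadd_zero_right [simp]:
  "C \<in> Obj X \<Longrightarrow> A \<in> Obj X \<Longrightarrow> d \<in> EE X C A \<Longrightarrow> eadd X C A d (ezero X C A) = d"
  by (rule abgrp_zero_right[OF ext_abgrp])

lemma eadd_comm:
  "C \<in> Obj X \<Longrightarrow> A \<in> Obj X \<Longrightarrow> d \<in> EE X C A \<Longrightarrow> d' \<in> EE X C A \<Longrightarrow> eadd X C A d d' = eadd X C A d' d"
  by (rule abgrp_comm[OF ext_abgrp])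

lemma eadd_assoc:
  "C \<in> Obj X \<Longrightarrow> A \<in> Obj X \<Longrightarrow> d \<in> EE X C A \<Longrightarrow> d' \<in> EE X C A \<Longrightarrow> d'' \<in> EE X C A
    \<Longrightarrow> eadd X C A (eadd X C A d d') d'' = eadd X C A d (eadd X C A d' d'')"
  by (rule abgrp_assoc[OF ext_abgrp])

lemma push_ext [simp]:
  "C \<in> Obj X \<Longrightarrow> A \<in> Obj X \<Longrightarrow> A' \<in> Obj X \<Longrightarrow> a \<in> Hom X A A' \<Longrightarrow> d \<in> EE X C A
    \<Longrightarrow> push X C A A' a d \<in> EE X C A'"
  using et1[unfolded ET1_def, THEN conjunct2, THEN conjunct1] by blast

lemma pull_ext [simp]:
  "C' \<in> Obj X \<Longrightarrow> C \<in> Obj X \<Longrightarrow> A \<in> Obj X \<Longrightarrow> c \<in> Hom X C' C \<Longrightarrow> d \<in> EE X C A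
    \<Longrightarrow> pull X C' C A c d \<in> EE X C' A"
  using et1[unfolded ET1_def, THEN conjunct2, THEN conjunct2, THEN conjunct1] by blast

lemma push_eadd:
  "C \<in> Obj X \<Longrightarrow> A \<in> Obj X \<Longrightarrow> A' \<in> Obj X \<Longrightarrow> a \<in> Hom X A A' \<Longrightarrow> d \<in> EE X C A \<Longrightarrow> d' \<in> EE X C A
    \<Longrightarrow> push X C A A' a (eadd X C A d d') = eadd X C A' (push X C A A' a d) (push X C A A' a d')"
  using et1[unfolded ET1_def, THEN conjunct2, THEN conjunct2, THEN conjunct2, THEN conjunct1] by blast

lemma push_madd:
  "C \<in> Obj X \<Longrightarrow> A \<in> Obj X \<Longrightarrow> A' \<in> Obj X \<Longrightarrow> a \<in> Hom X A A' \<Longrightarrow> b \<in> Hom X A A' \<Longrightarrow> d \<in> EE X C A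
    \<Longrightarrow> push X C A A' (madd X A A' a b) d = eadd X C A' (push X C A A' a d) (push X C A A' b d)"
  using et1[unfolded ET1_def, THEN conjunct2, THEN conjunct2, THEN conjunct2, THEN conjunct2, THEN conjunct1] by blast

lemma pull_eadd:
  "C' \<in> Obj X \<Longrightarrow> C \<in> Obj X \<Longrightarrow> A \<in> Obj X \<Longrightarrow> c \<in> Hom X C' C \<Longrightarrow> d \<in> EE X C A \<Longrightarrow> d' \<in> EE X C A
    \<Longrightarrow> pull X C' C A c (eadd X C A d d') = eadd X C' A (pull X C' C A c d) (pull X C' C A c d')"
  using et1[unfolded ET1_def, THEN conjunct2, THEN conjunct2, THEN conjunct2, THEN conjunct2, THEN conjunct2, THEN conjunct1] by blast

lemma pull_madd:
  "C' \<in> Obj X \<Longrightarrow> C \<in> Obj X \<Longrightarrow> A \<in> Obj X \<Longrightarrow> c \<in> Hom X C' C \<Longrightarrow> e \<in> Hom X C' C \<Longrightarrow> d \<in> EE X C A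
    \<Longrightarrow> pull X C' C A (madd X C' C c e) d = eadd X C' A (pull X C' C A c d) (pull X C' C A e d)"
  using et1[unfolded ET1_def, THEN conjunct2, THEN conjunct2, THEN conjunct2, THEN conjunct2, THEN conjunct2, THEN conjunct2, THEN conjunct1] by blast

lemma push_id [simp]: "C \<in> Obj X \<Longrightarrow> A \<in> Obj X \<Longrightarrow> d \<in> EE X C A \<Longrightarrow> push X C A A (idm X A) d = d"
  using et1[unfolded ET1_def, THEN conjunct2, THEN conjunct2, THEN conjunct2, THEN conjunct2, THEN conjunct2, THEN conjunct2, THEN conjunct2, THEN conjunct1] by blast

lemma pull_id [simp]: "C \<in> Obj X \<Longrightarrow> A \<in> Obj X \<Longrightarrow> d \<in> EE X C A \<Longrightarrow> pull X C C A (idm X C) d = d"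
  using et1[unfolded ET1_def, THEN conjunct2, THEN conjunct2, THEN conjunct2, THEN conjunct2, THEN conjunct2, THEN conjunct2, THEN conjunct2, THEN conjunct1] by blast

lemma push_comp:
  "C \<in> Obj X \<Longrightarrow> A \<in> Obj X \<Longrightarrow> A' \<in> Obj X \<Longrightarrow> A'' \<in> Obj X \<Longrightarrow> a \<in> Hom X A A' \<Longrightarrow> a' \<in> Hom X A' A''
    \<Longrightarrow> d \<in> EE X C A \<Longrightarrow> push X C A A'' (cmp X A A' A'' a' a) d = push X C A' A'' a' (push X C A A' a d)"
  using et1[unfolded ET1_def, THEN conjunct2, THEN conjunct2, THEN conjunct2, THEN conjunct2, THEN conjunct2, THEN conjunct2, THEN conjunct2, THEN conjunct2, THEN conjunct1] by blast

lemma pull_comp: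
  "C'' \<in> Obj X \<Longrightarrow> C' \<in> Obj X \<Longrightarrow> C \<in> Obj X \<Longrightarrow> A \<in> Obj X \<Longrightarrow> c' \<in> Hom X C'' C' \<Longrightarrow> c \<in> Hom X C' C
    \<Longrightarrow> d \<in> EE X C A \<Longrightarrow> pull X C'' C A (cmp X C'' C' C c c') d = pull X C'' C' A c' (pull X C' C A c d)"
  using et1[unfolded ET1_def, THEN conjunct2, THEN conjunct2, THEN conjunct2, THEN conjunct2, THEN conjunct2, THEN conjunct2, THEN conjunct2, THEN conjunct2, THEN conjunct2, THEN conjunct1] by blast

lemma push_pull_comm:
  "C' \<in> Obj X \<Longrightarrow> C \<in> Obj X \<Longrightarrow> A \<in> Obj X \<Longrightarrow> A' \<in> Obj X \<Longrightarrow> c \<in> Hom X C' C \<Longrightarrow> a \<in> Hom X A A'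
    \<Longrightarrow> d \<in> EE X C A \<Longrightarrow> push X C' A A' a (pull X C' C A c d) = pull X C' C A' c (push X C A A' a d)"
  using et1[unfolded ET1_def, THEN conjunct2, THEN conjunct2, THEN conjunct2, THEN conjunct2, THEN conjunct2, THEN conjunct2, THEN conjunct2, THEN conjunct2, THEN conjunct2, THEN conjunct2] by blast

lemma push_ezero [simp]:
  assumes "C \<in> Obj X" "A \<in> Obj X" "A' \<in> Obj X" "a \<in> Hom X A A'"
  shows "push X C A A' a (ezero X C A) = ezero X C A'"
proof -
  have "push X C A A' a (ezero X C A)
      = eadd X C A' (push X C A A' a (ezero X C A)) (push X C A A' a (ezero X C A))"
    using push_eadd[of C A A' a "ezero X C A" "ezero X C A"] assms by simp
  then show ?thesis using abgrp_idem_zero[OF ext_abgrp[of C A']] assms by simp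
qed

lemma pull_ezero [simp]:
  assumes "C' \<in> Obj X" "C \<in> Obj X" "A \<in> Obj X" "c \<in> Hom X C' C"
  shows "pull X C' C A c (ezero X C A) = ezero X C' A"
proof -
  have "pull X C' C A c (ezero X C A)
      = eadd X C' A (pull X C' C A c (ezero X C A)) (pull X C' C A c (ezero X C A))"
    using pull_eadd[of C' C A c "ezero X C A" "ezero X C A"] assms by simp
  then show ?thesis using abgrp_idem_zero[OF ext_abgrp[of C' A]] assms by simp
qed

lemma push_mzero [simp]:
  assumes "C \<in> Obj X" "A \<in> Obj X" "A' \<in> Obj X" "d \<in> EE X C A"
  shows "push X C A A' (mzero X A A') d = ezero X C A'"
proof -
  have "push X C A A' (mzero X A A') d
      = eadd X C A' (push X C A A' (mzero X A A') d) (push X C A A' (mzero X A A') d)"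
    using push_madd[of C A A' "mzero X A A'" "mzero X A A'" d] assms by simp
  then show ?thesis using abgrp_idem_zero[OF ext_abgrp[of C A']] assms by simp
qed

lemma pull_mzero [simp]:
  assumes "C' \<in> Obj X" "C \<in> Obj X" "A \<in> Obj X" "d \<in> EE X C A"
  shows "pull X C' C A (mzero X C' C) d = ezero X C' A"
proof -
  have "pull X C' C A (mzero X C' C) d
      = eadd X C' A (pull X C' C A (mzero X C' C) d) (pull X C' C A (mzero X C' C) d)"
    using pull_madd[of C' C A "mzero X C' C" "mzero X C' C" d] assms by simp
  then show ?thesis using abgrp_idem_zero[OF ext_abgrp[of C' A]] assms by simp
qed

lemma rlz_typed:
  "rlz X C A d B x y \<Longrightarrow>
     A \<in> Obj X \<and> C \<in> Obj X \<and> d \<in> EE X C A \<and> B \<in> Obj X \<and> x \<in> Hom X A B \<and> y \<in> Hom X B C"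
  using et2[unfolded ET2_def, THEN conjunct1] by blast

lemma rlz_exists: "C \<in> Obj X \<Longrightarrow> A \<in> Obj X \<Longrightarrow> d \<in> EE X C A \<Longrightarrow> \<exists>B x y. rlz X C A d B x y"
  using et2[unfolded ET2_def, THEN conjunct2, THEN conjunct1] by blast

lemma rlz_morphism:
  "rlz X C A d B x y \<Longrightarrow> rlz X C' A' d' B' x' y' \<Longrightarrow> a \<in> Hom X A A' \<Longrightarrow> c \<in> Hom X C C'
    \<Longrightarrow> push X C A A' a d = pull X C C' A' c d' \<Longrightarrow> \<exists>b. etri_mor X C A d B x y C' A' d' B' x' y' a b c"
  using et2[unfolded ET2_def, THEN conjunct2, THEN conjunct2, THEN conjunct2, THEN conjunct2, THEN conjunct1] by blast

lemma rlz_biprod: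
  "A \<in> Obj X \<Longrightarrow> C \<in> Obj X \<Longrightarrow> is_biprod X A C P i1 i2 p1 p2 \<Longrightarrow> rlz X C A (ezero X C A) P i1 p2"
  using et2[unfolded ET2_def, THEN conjunct2, THEN conjunct2, THEN conjunct2, THEN conjunct2, THEN conjunct2, THEN conjunct1] by blast

lemma ET3_morphism:
  "rlz X C A d B x y \<Longrightarrow> rlz X C' A' d' B' x' y' \<Longrightarrow> a \<in> Hom X A A' \<Longrightarrow> b \<in> Hom X B B'
    \<Longrightarrow> cmp X A B B' b x = cmp X A A' B' x' a \<Longrightarrow> \<exists>c. etri_mor X C A d B x y C' A' d' B' x' y' a b c"
  using et3 unfolding ET3_def by blast

lemma ET3op_morphism:
  "rlz X C A d B x y \<Longrightarrow> rlz X C' A' d' B' x' y' \<Longrightarrow> b \<in> Hom X B B' \<Longrightarrow> c \<in> Hom X C C'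
    \<Longrightarrow> cmp X B C C' c y = cmp X B B' C' y' b \<Longrightarrow> \<exists>a. etri_mor X C A d B x y C' A' d' B' x' y' a b c"
  using et3op unfolding ET3op_def by blast

lemma ET4E:
  assumes "rlz X D A d B f f'" "rlz X F B d' C g g'"
  obtains E h' dd e d'' where "E \<in> Obj X" "dd \<in> Hom X D E" "e \<in> Hom X E F"
    "rlz X E A d'' C (cmp X A B C g f) h'" "cmp X B D E dd f' = cmp X B C E h' g"
    "cmp X C E F e h' = g'" "rlz X F D (push X F B D f' d') E dd e"
    "pull X D E A dd d'' = d" "push X E A B f d'' = pull X E F B e d'"
  using et4[unfolded ET4_def, rule_format, OF conjI[OF assms]] that by blast

lemma ET4opE:
  assumes "rlz X B D d A f' f" "rlz X C F d' B g' g"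
  obtains E h' dd e d'' where "E \<in> Obj X" "dd \<in> Hom X D E" "e \<in> Hom X E F"
    "rlz X C E d'' A h' (cmp X A B C g f)" "cmp X D E A h' dd = f'"
    "cmp X E A B f h' = cmp X E F B g' e" "rlz X F D (pull X F B D g' d) E dd e"
    "d' = push X C E F e d''" "push X B D E dd d = pull X B C E g d''"
  using et4op[unfolded ET4op_def, rule_format, OF conjI[OF assms]] that by blast

lemma etri_morD:
  "etri_mor X C A d B x y C' A' d' B' x' y' a b c \<Longrightarrow>
     a \<in> Hom X A A' \<and> b \<in> Hom X B B' \<and> c \<in> Hom X C C'
   \<and> cmp X A B B' b x = cmp X A A' B' x' a
   \<and> cmp X B C C' c y = cmp X B B' C' y' b
   \<and> push X C A A' a d = pull X C C' A' c d'"
  unfolding etri_mor_def by simp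

section \<open>Exactness properties of conflations\<close>

lemma rlz_comp_zero:
  assumes r: "rlz X C A d B x y"
  shows "cmp X A B C y x = mzero X A C"
proof -
  from rlz_typed[OF r] have o: "A \<in> Obj X" "C \<in> Obj X" "d \<in> EE X C A" "B \<in> Obj X" "x \<in> Hom X A B" "y \<in> Hom X B C" by auto
  obtain Z where Z: "Z \<in> Obj X" using zero_object_exists by blast
  obtain P i1 i2 p1 p2 where bp: "is_biprod X A Z P i1 i2 p1 p2" using biprod_exists o Z by blast
  note b = biprodD[OF bp]
  have r0: "rlz X Z A (ezero X Z A) P i1 p2" using rlz_biprod o Z bp by blast
  have e1: "cmp X A P B (cmp X P A B x p1) i1 = x"
  proof -
    have "cmp X A P B (cmp X P A B x p1) i1 = cmp X A A B x (cmp X A P A p1 i1)"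
      by (rule comp_assoc[symmetric]) (simp_all add: o b)
    also have "\<dots> = x" using o b by simp
    finally show ?thesis .
  qed
  then have "cmp X A P B (cmp X P A B x p1) i1 = cmp X A A B x (idm X A)" using o by simp
  then obtain c where m: "etri_mor X Z A (ezero X Z A) P i1 p2 C A d B x y (idm X A) (cmp X P A B x p1) c"
    using ET3_morphism[OF r0 r, of "idm X A" "cmp X P A B x p1"] o b by auto
  then have c: "c \<in> Hom X Z C" "cmp X P Z C c p2 = cmp X P B C y (cmp X P A B x p1)"
    using etri_morD by auto
  have "cmp X A B C y x = cmp X A B C y (cmp X A P B (cmp X P A B x p1) i1)" using e1 by simp
  also have "\<dots> = cmp X A P C (cmp X P B C y (cmp X P A B x p1)) i1"
    by (rule comp_assoc) (simp_all add: o b)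
  also have "\<dots> = cmp X A P C (cmp X P Z C c p2) i1" using c by simp
  also have "\<dots> = cmp X A Z C c (cmp X A P Z p2 i1)"
    by (rule comp_assoc[symmetric]) (simp_all add: o b c Z)
  also have "\<dots> = mzero X A C" using b o Z c by simp
  finally show ?thesis .
qed

lemma rlz_pull_deflation:
  assumes r: "rlz X C A d B x y"
  shows "pull X B C A y d = ezero X B A"
proof -
  from rlz_typed[OF r] have o: "A \<in> Obj X" "C \<in> Obj X" "d \<in> EE X C A" "B \<in> Obj X" "x \<in> Hom X A B" "y \<in> Hom X B C" by auto
  obtain Z where Z: "Z \<in> Obj X" using zero_object_exists by blast
  obtain P i1 i2 p1 p2 where bp: "is_biprod X Z B P i1 i2 p1 p2" using biprod_exists o Z by blast
  note b = biprodD[OF bp]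
  have r0: "rlz X B Z (ezero X B Z) P i1 p2" using rlz_biprod o Z bp by blast
  obtain a where m: "etri_mor X B Z (ezero X B Z) P i1 p2 C A d B x y a p2 y"
    using ET3op_morphism[OF r0 r, of p2 y] o b by auto
  then have "a \<in> Hom X Z A" "push X B Z A a (ezero X B Z) = pull X B C A y d" using etri_morD by auto
  then show ?thesis using o Z by simp
qed

lemma lift_through_inflation:
  assumes r: "rlz X C A d B x y" and W: "W \<in> Obj X" and u: "u \<in> Hom X W B"
    and z: "cmp X W B C y u = mzero X W C"
  shows "\<exists>a \<in> Hom X W A. u = cmp X W A B x a"
proof -
  from rlz_typed[OF r] have o: "A \<in> Obj X" "C \<in> Obj X" "d \<in> EE X C A" "B \<in> Obj X" "x \<in> Hom X A B" "y \<in> Hom X B C" by auto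
  obtain Z where Z: "Z \<in> Obj X" using zero_object_exists by blast
  obtain P i1 i2 p1 p2 where bp: "is_biprod X W Z P i1 i2 p1 p2" using biprod_exists W Z by blast
  note b = biprodD[OF bp]
  have r0: "rlz X Z W (ezero X Z W) P i1 p2" using rlz_biprod W Z bp by blast
  have sq: "cmp X P Z C (mzero X Z C) p2 = cmp X P B C y (cmp X P W B u p1)"
  proof -
    have "cmp X P B C y (cmp X P W B u p1) = cmp X P W C (cmp X W B C y u) p1"
      by (rule comp_assoc) (simp_all add: o b u W)
    then show ?thesis using z o b W Z by simp
  qed
  obtain a where m: "etri_mor X Z W (ezero X Z W) P i1 p2 C A d B x y a (cmp X P W B u p1) (mzero X Z C)"
    using ET3op_morphism[OF r0 r, of "cmp X P W B u p1" "mzero X Z C"] o b u W Z sq by auto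
  then have a: "a \<in> Hom X W A" "cmp X W P B (cmp X P W B u p1) i1 = cmp X W A B x a" using etri_morD by auto
  have "cmp X W P B (cmp X P W B u p1) i1 = cmp X W W B u (cmp X W P W p1 i1)"
    by (rule comp_assoc[symmetric]) (simp_all add: o b u W)
  also have "\<dots> = u" using b u W o by simp
  finally show ?thesis using a by auto
qed

lemma lift_through_deflation:
  assumes r: "rlz X C A d B x y" and W: "W \<in> Obj X" and c: "c \<in> Hom X W C"
    and z: "pull X W C A c d = ezero X W A"
  shows "\<exists>t \<in> Hom X W B. c = cmp X W B C y t"
proof -
  from rlz_typed[OF r] have o: "A \<in> Obj X" "C \<in> Obj X" "d \<in> EE X C A" "B \<in> Obj X" "x \<in> Hom X A B" "y \<in> Hom X B C" by auto
  obtain P i1 i2 p1 p2 where bp: "is_biprod X A W P i1 i2 p1 p2" using biprod_exists W o by blast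
  note b = biprodD[OF bp]
  have r0: "rlz X W A (ezero X W A) P i1 p2" using rlz_biprod W o bp by blast
  obtain bb where m: "etri_mor X W A (ezero X W A) P i1 p2 C A d B x y (idm X A) bb c"
    using rlz_morphism[OF r0 r, of "idm X A" c] o c W z by auto
  then have bb: "bb \<in> Hom X P B" "cmp X P W C c p2 = cmp X P B C y bb" using etri_morD by auto
  have "c = cmp X W W C c (cmp X W P W p2 i2)" using b c W o by simp
  also have "\<dots> = cmp X W P C (cmp X P W C c p2) i2" by (rule comp_assoc) (simp_all add: o b c W)
  also have "\<dots> = cmp X W P C (cmp X P B C y bb) i2" using bb by simp
  also have "\<dots> = cmp X W B C y (cmp X W P B bb i2)" by (rule comp_assoc[symmetric]) (simp_all add: o b bb W)
  finally show ?thesis using bb b o W by auto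
qed

lemma extend_through_inflation:
  assumes r: "rlz X C A d B x y" and A': "A' \<in> Obj X" and a: "a \<in> Hom X A A'"
    and z: "push X C A A' a d = ezero X C A'"
  shows "\<exists>s \<in> Hom X B A'. a = cmp X A B A' s x"
proof -
  from rlz_typed[OF r] have o: "A \<in> Obj X" "C \<in> Obj X" "d \<in> EE X C A" "B \<in> Obj X" "x \<in> Hom X A B" "y \<in> Hom X B C" by auto
  obtain P i1 i2 p1 p2 where bp: "is_biprod X A' C P i1 i2 p1 p2" using biprod_exists A' o by blast
  note b = biprodD[OF bp]
  have r0: "rlz X C A' (ezero X C A') P i1 p2" using rlz_biprod A' o bp by blast
  obtain bb where m: "etri_mor X C A d B x y C A' (ezero X C A') P i1 p2 a bb (idm X C)"
    using rlz_morphism[OF r r0, of a "idm X C"] o a A' z by auto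
  then have bb: "bb \<in> Hom X B P" "cmp X A B P bb x = cmp X A A' P i1 a" using etri_morD by auto
  have "a = cmp X A A' A' (cmp X A' P A' p1 i1) a" using b a A' o by simp
  also have "\<dots> = cmp X A P A' p1 (cmp X A A' P i1 a)" by (rule comp_assoc[symmetric]) (simp_all add: o b a A')
  also have "\<dots> = cmp X A P A' p1 (cmp X A B P bb x)" using bb by simp
  also have "\<dots> = cmp X A B A' (cmp X B P A' p1 bb) x" by (rule comp_assoc) (simp_all add: o b bb A')
  finally show ?thesis using bb b o A' by auto
qed

lemma ext_pull_of_push_zero:
  assumes r: "rlz X C A d E e y" and W: "W \<in> Obj X" and xi: "xi \<in> EE X W A"
    and z: "push X W A E e xi = ezero X W E"
  shows "\<exists>g \<in> Hom X W C. xi = pull X W C A g d"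
proof -
  from rlz_typed[OF r] have o: "A \<in> Obj X" "C \<in> Obj X" "d \<in> EE X C A" "E \<in> Obj X" "e \<in> Hom X A E" "y \<in> Hom X E C" by auto
  obtain Y f q where rx: "rlz X W A xi Y f q" using rlz_exists W o xi by blast
  from rlz_typed[OF rx] have oY: "Y \<in> Obj X" "f \<in> Hom X A Y" by auto
  obtain s where s: "s \<in> Hom X Y E" "e = cmp X A Y E s f" using extend_through_inflation[OF rx o(4) o(5) z] by blast
  obtain g where "etri_mor X W A xi Y f q C A d E e y (idm X A) s g"
    using ET3_morphism[OF rx r, of "idm X A" s] s o by auto
  then have "g \<in> Hom X W C" "push X W A A (idm X A) xi = pull X W C A g d" using etri_morD by auto
  then show ?thesis using o W xi by auto
qed

lemma ext_push_of_pull_zero: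
  assumes r: "rlz X C K g P k p" and B': "B' \<in> Obj X" and eta: "eta \<in> EE X C B'"
    and z: "pull X P C B' p eta = ezero X P B'"
  shows "\<exists>v \<in> Hom X K B'. eta = push X C K B' v g"
proof -
  from rlz_typed[OF r] have o: "K \<in> Obj X" "C \<in> Obj X" "g \<in> EE X C K" "P \<in> Obj X" "k \<in> Hom X K P" "p \<in> Hom X P C" by auto
  obtain Y f q where re: "rlz X C B' eta Y f q" using rlz_exists B' o eta by blast
  from rlz_typed[OF re] have oY: "Y \<in> Obj X" "q \<in> Hom X Y C" by auto
  obtain t where t: "t \<in> Hom X P Y" "p = cmp X P Y C q t" using lift_through_deflation[OF re o(4) o(6) z] by blast
  obtain v where "etri_mor X C K g P k p C B' eta Y f q v t (idm X C)"
    using ET3op_morphism[OF r re, of t "idm X C"] t o by auto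
  then have "v \<in> Hom X K B'" "push X C K B' v g = pull X C C B' (idm X C) eta" using etri_morD by auto
  then show ?thesis using o B' eta by auto
qed

lemma ext_push_of_push_zero:
  assumes r: "rlz X C A d B x y" and W: "W \<in> Obj X" and th: "th \<in> EE X W B"
    and z: "push X W B C y th = ezero X W C"
  shows "\<exists>ze \<in> EE X W A. th = push X W A B x ze"
proof -
  from rlz_typed[OF r] have o: "A \<in> Obj X" "C \<in> Obj X" "d \<in> EE X C A" "B \<in> Obj X" "x \<in> Hom X A B" "y \<in> Hom X B C" by auto
  obtain Y f g where rt: "rlz X W B th Y f g" using rlz_exists W o th by blast
  from rlz_typed[OF rt] have oY: "Y \<in> Obj X" "f \<in> Hom X B Y" "g \<in> Hom X Y W" by auto
  obtain E h' dd e d'' where E: "E \<in> Obj X" "dd \<in> Hom X C E" "e \<in> Hom X E W"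
    "rlz X E A d'' Y (cmp X A B Y f x) h'"
    "rlz X W C (push X W B C y th) E dd e"
    "push X E A B x d'' = pull X E W B e th"
    by (rule ET4E[OF r rt]) blast
  have d'': "d'' \<in> EE X E A" using rlz_typed[OF E(4)] by auto
  have r0: "rlz X W C (ezero X W C) E dd e" using E(5) z by simp
  obtain s where s: "s \<in> Hom X W E" "idm X W = cmp X W E W e s"
    using lift_through_deflation[OF r0 W id_hom[OF W]] W o by auto
  have "th = pull X W W B (idm X W) th" using W o th by simp
  also have "\<dots> = pull X W E B s (pull X E W B e th)" using s pull_comp[of W E W B s e th] W E o th by simp
  also have "\<dots> = pull X W E B s (push X E A B x d'')" using E by simp
  also have "\<dots> = push X W A B x (pull X W E A s d'')" using push_pull_comm[of W E A B s x d''] s W E o d'' by simp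
  finally show ?thesis using s W E o d'' by auto
qed

lemma split_conflation_biprod:
  assumes r: "rlz X A K (ezero X A K) E dd ee" and t: "t \<in> Hom X E K"
    and td: "cmp X K E K t dd = idm X K"
  obtains s where "is_biprod X A K E s dd ee t"
proof -
  from rlz_typed[OF r] have o: "K \<in> Obj X" "A \<in> Obj X" "E \<in> Obj X" "dd \<in> Hom X K E" "ee \<in> Hom X E A"
    by auto
  have ed: "cmp X K E A ee dd = mzero X K A" using rlz_comp_zero[OF r] .
  obtain s0 where s0: "s0 \<in> Hom X A E" "idm X A = cmp X A E A ee s0"
    using lift_through_deflation[OF r o(2) id_hom[OF o(2)]] o by auto
  obtain s where s: "s \<in> Hom X A E" "cmp X A E A ee s = idm X A" "cmp X A E K t s = mzero X A K"
    using section_killed_by_retraction[OF o(2,1,3) o(4,5) s0(1) t s0(2)[symmetric] td ed] .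
  have "u = mzero X E E"
    if u: "u \<in> Hom X E E" "cmp X E E A ee u = mzero X E A" "cmp X E E K t u = mzero X E K" for u
  proof -
    obtain w where w: "w \<in> Hom X E K" "u = cmp X E K E dd w"
      using lift_through_inflation[OF r o(3) u(1,2)] by blast
    have "w = cmp X E K K (cmp X K E K t dd) w" using td w o by simp
    also have "\<dots> = cmp X E E K t u" using comp_assoc[of E K E K w dd t] w o t by simp
    finally show ?thesis using u w o by simp
  qed
  then show ?thesis
    using that biprod_of_split_pair[OF o(2,1,3) o(4,5) s(1) t s(2) td s(3) ed] by blast
qed

lemma pull_biprod_sum:
  assumes bp: "is_biprod X C1 C2 P j1 j2 q1 q2" and o: "C1 \<in> Obj X" "C2 \<in> Obj X" "A \<in> Obj X"
    and d: "d1 \<in> EE X C1 A" "d2 \<in> EE X C2 A"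
  shows "pull X C1 P A j1 (eadd X P A (pull X P C1 A q1 d1) (pull X P C2 A q2 d2)) = d1"
    and "pull X C2 P A j2 (eadd X P A (pull X P C1 A q1 d1) (pull X P C2 A q2 d2)) = d2"
proof -
  note b = biprodD[OF bp]
  show "pull X C1 P A j1 (eadd X P A (pull X P C1 A q1 d1) (pull X P C2 A q2 d2)) = d1"
    using pull_eadd[of C1 P A j1] pull_comp[of C1 P C1 A j1 q1 d1, symmetric]
      pull_comp[of C1 P C2 A j1 q2 d2, symmetric]
    by (simp add: b o d)
  show "pull X C2 P A j2 (eadd X P A (pull X P C1 A q1 d1) (pull X P C2 A q2 d2)) = d2"
    using pull_eadd[of C2 P A j2] pull_comp[of C2 P C1 A j2 q1 d1, symmetric]
      pull_comp[of C2 P C2 A j2 q2 d2, symmetric]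
    by (simp add: b o d)
qed

lemma corrected_ext_in_image:
  assumes rd: "rlz X C A d E e y"
    and o: "K \<in> Obj X" "E0 \<in> Obj X" and h: "dd \<in> Hom X K E0" "n \<in> Hom X E0 K"
    and g: "g \<in> EE X C K" and d'': "d'' \<in> EE X C E0"
    and compat: "push X E K E0 dd (pull X E C K y g) = pull X E C E0 y d''"
    and nd: "madd X K K (idm X K) (cmp X K E0 K n dd) = mzero X K K"
  obtains v where "v \<in> Hom X A K" "eadd X C K g (push X C E0 K n d'') = push X C A K v d"
proof -
  from rlz_typed[OF rd] have oE: "E \<in> Obj X" "C \<in> Obj X" "y \<in> Hom X E C" by auto
  define z where "z = pull X E C K y g"
  have z: "z \<in> EE X E K" unfolding z_def using oE o g by simp
  have "eadd X E K z (push X E K K (cmp X K E0 K n dd) z)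
      = push X E K K (madd X K K (idm X K) (cmp X K E0 K n dd)) z"
    using push_madd[of E K K "idm X K" "cmp X K E0 K n dd" z] o h z oE by simp
  also have "\<dots> = ezero X E K" using nd o z oE by simp
  finally have zero: "eadd X E K z (push X E K K (cmp X K E0 K n dd) z) = ezero X E K" .
  have "pull X E C K y (eadd X C K g (push X C E0 K n d''))
      = eadd X E K z (pull X E C K y (push X C E0 K n d''))"
    unfolding z_def by (rule pull_eadd) (simp_all add: oE o h g d'')
  also have "pull X E C K y (push X C E0 K n d'') = push X E E0 K n (pull X E C E0 y d'')"
    by (rule push_pull_comm[symmetric]) (simp_all add: oE o h d'')
  also have "\<dots> = push X E K K (cmp X K E0 K n dd) z"
    unfolding compat[symmetric] z_def by (rule push_comp[symmetric]) (simp_all add: oE o h g)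
  finally have "pull X E C K y (eadd X C K g (push X C E0 K n d'')) = ezero X E K"
    using zero by simp
  moreover have "eadd X C K g (push X C E0 K n d'') \<in> EE X C K" using oE o h g d'' by simp
  ultimately show ?thesis using ext_push_of_pull_zero[OF rd o(1)] that by blast
qed

text \<open>
  In a split conflation \<open>K \<rightarrow> E\<^sub>0 \<rightarrow> A\<close> the retraction of \<open>dd\<close> is unique only up to
  morphisms factoring through \<open>ee\<close>; this freedom is used to make it push \<open>d''\<close> to \<open>g\<close>.
\<close>
lemma adjusted_retraction:
  assumes rd: "rlz X C A d E e y" and rs: "rlz X A K (ezero X A K) E0 dd ee"
    and d'': "d'' \<in> EE X C E0" "d = push X C E0 A ee d''" and g: "g \<in> EE X C K"
    and compat: "push X E K E0 dd (pull X E C K y g) = pull X E C E0 y d''"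
  obtains t where "t \<in> Hom X E0 K" "cmp X K E0 K t dd = idm X K" "push X C E0 K t d'' = g"
proof -
  from rlz_typed[OF rs] rlz_typed[OF rd]
  have o: "K \<in> Obj X" "A \<in> Obj X" "E0 \<in> Obj X" "dd \<in> Hom X K E0" "ee \<in> Hom X E0 A" "C \<in> Obj X"
    by auto
  obtain r where r: "r \<in> Hom X E0 K" "idm X K = cmp X K E0 K r dd"
    using extend_through_inflation[OF rs o(1) id_hom[OF o(1)]] o by auto
  obtain n where n: "n \<in> Hom X E0 K" "madd X E0 K r n = mzero X E0 K"
    using madd_inverse[OF o(3) o(1) r(1)] by blast
  have "madd X K K (idm X K) (cmp X K E0 K n dd) = cmp X K E0 K (madd X E0 K r n) dd"
    using comp_madd_left[of K E0 K dd r n] r n o by simp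
  then have nd: "madd X K K (idm X K) (cmp X K E0 K n dd) = mzero X K K" using n o by simp
  obtain v where v: "v \<in> Hom X A K" "eadd X C K g (push X C E0 K n d'') = push X C A K v d"
    using corrected_ext_in_image[OF rd o(1,3) o(4) n(1) g d''(1) compat nd] .
  define t where "t = madd X E0 K r (cmp X E0 A K v ee)"
  show ?thesis
  proof
    show "t \<in> Hom X E0 K" unfolding t_def using r v o by simp
    have "cmp X K E0 K t dd = madd X K K (idm X K) (cmp X K A K v (cmp X K E0 A ee dd))"
      unfolding t_def using comp_madd_left[of K E0 K dd r "cmp X E0 A K v ee"]
        comp_assoc[of K E0 A K dd ee v] r v o by simp
    then show "cmp X K E0 K t dd = idm X K" using rlz_comp_zero[OF rs] v o by simp
    have nr: "push X C E0 K n d'' \<in> EE X C K" "push X C E0 K r d'' \<in> EE X C K"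
      using n r o d'' by simp_all
    have "push X C E0 K t d'' = eadd X C K (push X C E0 K r d'') (push X C A K v d)"
      unfolding t_def d''(2) using push_madd[of C E0 K r "cmp X E0 A K v ee" d'']
        push_comp[of C E0 A K ee v d''] r v o d'' by simp
    also have "\<dots> = eadd X C K g (eadd X C K (push X C E0 K r d'') (push X C E0 K n d''))"
      unfolding v(2)[symmetric] using eadd_assoc eadd_comm nr g o by metis
    also have "\<dots> = g"
      using push_madd[of C E0 K r n d'', symmetric] n r o d'' g by simp
    finally show "push X C E0 K t d'' = g" .
  qed
qed

section \<open>Ideals and object ideals\<close>

lemma ideal_hom: "ideal X J \<Longrightarrow> A \<in> Obj X \<Longrightarrow> B \<in> Obj X \<Longrightarrow> f \<in> J A B \<Longrightarrow> f \<in> Hom X A B"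
  unfolding ideal_def by blast

lemma ideal_mzero: "ideal X J \<Longrightarrow> A \<in> Obj X \<Longrightarrow> B \<in> Obj X \<Longrightarrow> mzero X A B \<in> J A B"
  unfolding ideal_def by blast

lemma ideal_madd:
  "ideal X J \<Longrightarrow> A \<in> Obj X \<Longrightarrow> B \<in> Obj X \<Longrightarrow> f \<in> J A B \<Longrightarrow> g \<in> J A B \<Longrightarrow> madd X A B f g \<in> J A B"
  unfolding ideal_def by blast

lemma ideal_comp:
  "ideal X J \<Longrightarrow> W \<in> Obj X \<Longrightarrow> A \<in> Obj X \<Longrightarrow> B \<in> Obj X \<Longrightarrow> Z \<in> Obj X \<Longrightarrow> f \<in> J A B
    \<Longrightarrow> u \<in> Hom X W A \<Longrightarrow> v \<in> Hom X B Z \<Longrightarrow> cmp X W B Z v (cmp X W A B f u) \<in> J W Z"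
  unfolding ideal_def by blast

lemma ideal_comp_right:
  "ideal X J \<Longrightarrow> W \<in> Obj X \<Longrightarrow> A \<in> Obj X \<Longrightarrow> B \<in> Obj X \<Longrightarrow> f \<in> J A B \<Longrightarrow> u \<in> Hom X W A
    \<Longrightarrow> cmp X W A B f u \<in> J W B"
  using ideal_comp[of J W A B B f u "idm X B"] ideal_hom by simp

lemma ideal_comp_left:
  "ideal X J \<Longrightarrow> A \<in> Obj X \<Longrightarrow> B \<in> Obj X \<Longrightarrow> Z \<in> Obj X \<Longrightarrow> f \<in> J A B \<Longrightarrow> v \<in> Hom X B Z
    \<Longrightarrow> cmp X A B Z v f \<in> J A Z"
  using ideal_comp[of J A A B Z f "idm X A" v] ideal_hom by simp

lemma ObK_obj: "K \<in> ObK X J \<Longrightarrow> K \<in> Obj X"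
  unfolding ObK_def by blast

lemma gen_ideal_least:
  "ideal X J \<Longrightarrow> (\<And>P Q. P \<in> Obj X \<Longrightarrow> Q \<in> Obj X \<Longrightarrow> K P Q \<subseteq> J P Q) \<Longrightarrow> f \<in> gen_ideal X K A B
    \<Longrightarrow> f \<in> J A B"
  unfolding gen_ideal_def by blast

definition factor_through :: "'o set \<Rightarrow> 'o \<Rightarrow> 'o \<Rightarrow> 'm set" where
  "factor_through S A B =
     {f \<in> Hom X A B. \<exists>K \<in> S. \<exists>u \<in> Hom X A K. \<exists>v \<in> Hom X K B. f = cmp X A K B v u}"

lemma factor_through_gen_ideal:
  assumes o: "A \<in> Obj X" "B \<in> Obj X" and K: "K \<in> S" "S \<subseteq> Obj X"
    and u: "u \<in> Hom X A K" and v: "v \<in> Hom X K B"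
  shows "cmp X A K B v u \<in> gen_ideal X (\<lambda>P Q. if P = Q \<and> P \<in> S then {idm X P} else {}) A B"
  unfolding gen_ideal_def
proof (intro CollectI allI impI)
  fix J assume J: "ideal X J \<and> (\<forall>P \<in> Obj X. \<forall>Q \<in> Obj X.
                     (if P = Q \<and> P \<in> S then {idm X P} else {}) \<subseteq> J P Q)"
  have Ko: "K \<in> Obj X" using K by blast
  with J have "(if K = K \<and> K \<in> S then {idm X K} else {}) \<subseteq> J K K" by blast
  with K(1) have "idm X K \<in> J K K" by simp
  then have "cmp X A K B v (cmp X A K K (idm X K) u) \<in> J A B"
    using ideal_comp[of J A K K B "idm X K" u v] J o Ko u v by blast
  then show "cmp X A K B v u \<in> J A B" using o Ko u by simp
qed

lemma zero_object_ObK: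
  assumes J: "ideal X J" and Z: "Z \<in> Obj X" "Hom X Z Z = {mzero X Z Z}"
  shows "Z \<in> ObK X J"
  using ideal_mzero[OF J Z(1) Z(1)] id_hom[OF Z(1)] Z unfolding ObK_def by auto

lemma biprod_ObK:
  assumes J: "ideal X J" and bp: "is_biprod X K1 K2 P i1 i2 p1 p2"
    and K: "K1 \<in> ObK X J" "K2 \<in> ObK X J"
  shows "P \<in> ObK X J"
proof -
  note b = biprodD[OF bp]
  have o: "K1 \<in> Obj X" "K2 \<in> Obj X" using K ObK_obj by auto
  have "cmp X P K1 P i1 p1 \<in> J P P"
    using ideal_comp[OF J, of P K1 K1 P "idm X K1" p1 i1] K o b unfolding ObK_def by simp
  moreover have "cmp X P K2 P i2 p2 \<in> J P P"
    using ideal_comp[OF J, of P K2 K2 P "idm X K2" p2 i2] K o b unfolding ObK_def by simp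
  ultimately have "madd X P P (cmp X P K1 P i1 p1) (cmp X P K2 P i2 p2) \<in> J P P"
    using ideal_madd[OF J, of P P] b by blast
  then show ?thesis using b unfolding ObK_def by simp
qed

lemma factor_through_mzero:
  assumes J: "ideal X J" and o: "A \<in> Obj X" "B \<in> Obj X"
  shows "mzero X A B \<in> factor_through (ObK X J) A B"
proof -
  obtain Z where Z: "Z \<in> Obj X" "\<forall>A \<in> Obj X. Hom X A Z = {mzero X A Z} \<and> Hom X Z A = {mzero X Z A}"
    using zero_object_exists by blast
  have "Z \<in> ObK X J" using zero_object_ObK[OF J] Z by blast
  moreover have "mzero X A B = cmp X A Z B (mzero X Z B) (mzero X A Z)" using o Z by simp
  ultimately show ?thesis unfolding factor_through_def using o Z by fastforce
qed

lemma factor_through_madd: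
  assumes J: "ideal X J" and o: "A \<in> Obj X" "B \<in> Obj X"
    and fg: "f \<in> factor_through (ObK X J) A B" "g \<in> factor_through (ObK X J) A B"
  shows "madd X A B f g \<in> factor_through (ObK X J) A B"
proof -
  obtain K u v where K: "K \<in> ObK X J" "u \<in> Hom X A K" "v \<in> Hom X K B" "f = cmp X A K B v u"
    using fg(1) unfolding factor_through_def by blast
  obtain K' u' v' where K': "K' \<in> ObK X J" "u' \<in> Hom X A K'" "v' \<in> Hom X K' B" "g = cmp X A K' B v' u'"
    using fg(2) unfolding factor_through_def by blast
  have ok: "K \<in> Obj X" "K' \<in> Obj X" using K K' ObK_obj by auto
  obtain P i1 i2 p1 p2 where bp: "is_biprod X K K' P i1 i2 p1 p2" using biprod_exists ok by blast
  note b = biprodD[OF bp]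
  define U where "U = madd X A P (cmp X A K P i1 u) (cmp X A K' P i2 u')"
  define V where "V = madd X P B (cmp X P K B v p1) (cmp X P K' B v' p2)"
  have "U \<in> Hom X A P" "V \<in> Hom X P B" unfolding U_def V_def using o ok b K K' by simp_all
  moreover have "madd X A B f g = cmp X A P B V U"
    unfolding U_def V_def using comp_through_biprod[OF bp o ok K(2) K'(2) K(3) K'(3)] K K' by simp
  moreover have "madd X A B f g \<in> Hom X A B" using o ok K K' by simp
  ultimately show ?thesis
    unfolding factor_through_def using biprod_ObK[OF J bp K(1) K'(1)] by blast
qed

lemma factor_through_comp:
  assumes J: "ideal X J" and o: "W \<in> Obj X" "A \<in> Obj X" "B \<in> Obj X" "Z \<in> Obj X"
    and f: "f \<in> factor_through (ObK X J) A B" and w: "w \<in> Hom X W A" and z: "z \<in> Hom X B Z"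
  shows "cmp X W B Z z (cmp X W A B f w) \<in> factor_through (ObK X J) W Z"
proof -
  obtain K u v where K: "K \<in> ObK X J" "u \<in> Hom X A K" "v \<in> Hom X K B" "f = cmp X A K B v u"
    using f unfolding factor_through_def by blast
  have ok: "K \<in> Obj X" using K ObK_obj by auto
  have "cmp X W B Z z (cmp X W A B f w) = cmp X W K Z (cmp X K B Z z v) (cmp X W A K u w)"
    using comp_assoc[of W A K B w u v] comp_assoc[of W K B Z "cmp X W A K u w" v z] o ok K w z
    by simp
  moreover have "cmp X W B Z z (cmp X W A B f w) \<in> Hom X W Z" using o ok K w z by simp
  ultimately show ?thesis unfolding factor_through_def using K o ok w z by fastforce
qed

lemma factor_through_ideal:
  assumes J: "ideal X J"
  shows "ideal X (factor_through (ObK X J))"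
proof -
  have "factor_through (ObK X J) A B \<subseteq> Hom X A B" for A B
    unfolding factor_through_def by blast
  then show ?thesis
    unfolding ideal_def[of X "factor_through (ObK X J)"]
    using factor_through_mzero[OF J] factor_through_madd[OF J] factor_through_comp[OF J] by blast
qed

lemma object_ideal_iff_factor_through:
  assumes J: "ideal X J"
  shows "object_ideal X J \<longleftrightarrow>
           (\<forall>A \<in> Obj X. \<forall>B \<in> Obj X. J A B \<subseteq> factor_through (ObK X J) A B)"
proof -
  let ?K = "\<lambda>P Q. if P = Q \<and> P \<in> ObK X J then {idm X P} else {}"
  have K_J: "?K P Q \<subseteq> J P Q" if "P \<in> Obj X" "Q \<in> Obj X" for P Q
    unfolding ObK_def by auto
  have K_fac: "?K P Q \<subseteq> factor_through (ObK X J) P Q" if "P \<in> Obj X" "Q \<in> Obj X" for P Q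
  proof
    fix f assume "f \<in> ?K P Q"
    then have f: "P = Q" "P \<in> ObK X J" "f = idm X P" by (auto split: if_splits)
    have "idm X P = cmp X P P P (idm X P) (idm X P)" using that by simp
    then show "f \<in> factor_through (ObK X J) P Q"
      unfolding factor_through_def using f that by fastforce
  qed
  have gen_J: "gen_ideal X ?K A B \<subseteq> J A B" for A B
    using gen_ideal_least[OF J K_J] by blast
  have gen_fac: "gen_ideal X ?K A B \<subseteq> factor_through (ObK X J) A B" for A B
    using gen_ideal_least[OF factor_through_ideal[OF J] K_fac] by blast
  have fac_gen: "factor_through (ObK X J) A B \<subseteq> gen_ideal X ?K A B"
    if "A \<in> Obj X" "B \<in> Obj X" for A B
    using factor_through_gen_ideal[OF that] ObK_obj unfolding factor_through_def by blast
  show ?thesis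
    unfolding object_ideal_def using gen_J gen_fac fac_gen by blast
qed

end

section \<open>The subfunctor \<open>I\<^sup>\<star>\<close> and the orthogonal ideal of an ideal\<close>

locale extri_ideal = extri_category X for X :: "('o, 'm, 'e) extri" +
  fixes I :: "'o \<Rightarrow> 'o \<Rightarrow> 'm set"
  assumes ideal_I: "ideal X I"
begin

lemma I_hom: "A \<in> Obj X \<Longrightarrow> B \<in> Obj X \<Longrightarrow> f \<in> I A B \<Longrightarrow> f \<in> Hom X A B"
  by (rule ideal_hom[OF ideal_I])

lemma IstarI: "C \<in> Obj X \<Longrightarrow> i \<in> I W C \<Longrightarrow> d \<in> EE X C A \<Longrightarrow> pull X W C A i d \<in> Istar X I W A"
  unfolding Istar_def by blast

lemma IstarE:
  assumes "x \<in> Istar X I W A"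
  obtains C i d where "C \<in> Obj X" "i \<in> I W C" "d \<in> EE X C A" "x = pull X W C A i d"
  using assms unfolding Istar_def by blast

lemma Istar_ext: "W \<in> Obj X \<Longrightarrow> A \<in> Obj X \<Longrightarrow> x \<in> Istar X I W A \<Longrightarrow> x \<in> EE X W A"
  by (erule IstarE) (simp add: I_hom)

lemma Istar_ezero: "W \<in> Obj X \<Longrightarrow> A \<in> Obj X \<Longrightarrow> ezero X W A \<in> Istar X I W A"
  using IstarI[of W "mzero X W W" W "ezero X W A" A] ideal_mzero[OF ideal_I] by simp

lemma Istar_eadd:
  assumes o: "W \<in> Obj X" "A \<in> Obj X" and d: "d \<in> Istar X I W A" "d' \<in> Istar X I W A"
  shows "eadd X W A d d' \<in> Istar X I W A"
proof -
  obtain C1 i1 d1 where 1: "C1 \<in> Obj X" "i1 \<in> I W C1" "d1 \<in> EE X C1 A" "d = pull X W C1 A i1 d1"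
    using d(1) by (rule IstarE)
  obtain C2 i2 d2 where 2: "C2 \<in> Obj X" "i2 \<in> I W C2" "d2 \<in> EE X C2 A" "d' = pull X W C2 A i2 d2"
    using d(2) by (rule IstarE)
  have h: "i1 \<in> Hom X W C1" "i2 \<in> Hom X W C2" using 1 2 o I_hom by auto
  obtain P j1 j2 q1 q2 where bp: "is_biprod X C1 C2 P j1 j2 q1 q2" using biprod_exists 1 2 by blast
  note b = biprodD[OF bp]
  define dl where "dl = eadd X P A (pull X P C1 A q1 d1) (pull X P C2 A q2 d2)"
  have dl: "dl \<in> EE X P A" unfolding dl_def using b 1 2 o by simp
  define m where "m = madd X W P (cmp X W C1 P j1 i1) (cmp X W C2 P j2 i2)"
  have mI: "m \<in> I W P" unfolding m_def using ideal_madd[OF ideal_I] ideal_comp_left[OF ideal_I] 1 2 b o by simp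
  have "pull X W P A m dl
      = eadd X W A (pull X W P A (cmp X W C1 P j1 i1) dl) (pull X W P A (cmp X W C2 P j2 i2) dl)"
    unfolding m_def by (rule pull_madd) (simp_all add: b o h 1 2 dl)
  also have "pull X W P A (cmp X W C1 P j1 i1) dl = pull X W C1 A i1 (pull X C1 P A j1 dl)"
    by (rule pull_comp) (simp_all add: b o h 1 2 dl)
  also have "pull X W P A (cmp X W C2 P j2 i2) dl = pull X W C2 A i2 (pull X C2 P A j2 dl)"
    by (rule pull_comp) (simp_all add: b o h 1 2 dl)
  finally have "pull X W P A m dl = eadd X W A d d'"
    unfolding dl_def using pull_biprod_sum[OF bp] 1 2 o by simp
  moreover have "pull X W P A m dl \<in> Istar X I W A" using IstarI[of P m W dl A] b mI dl by simp
  ultimately show ?thesis by simp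
qed

lemma Istar_inverse:
  assumes o: "W \<in> Obj X" "A \<in> Obj X" and d: "d \<in> Istar X I W A"
  shows "\<exists>d' \<in> Istar X I W A. eadd X W A d d' = ezero X W A"
proof -
  obtain C i e where 1: "C \<in> Obj X" "i \<in> I W C" "e \<in> EE X C A" "d = pull X W C A i e"
    using d by (rule IstarE)
  have h: "i \<in> Hom X W C" using 1 o I_hom by auto
  obtain e' where e': "e' \<in> EE X C A" "eadd X C A e e' = ezero X C A"
    using abgrp_inverse[OF ext_abgrp[OF 1(1) o(2)] 1(3)] by blast
  have "eadd X W A d (pull X W C A i e') = pull X W C A i (eadd X C A e e')"
    using pull_eadd[of W C A i e e'] 1 e' o h by simp
  also have "\<dots> = ezero X W A" using e' o 1 h by simp
  finally show ?thesis using IstarI[OF 1(1) 1(2) e'(1)] by blast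
qed

lemma Istar_push:
  assumes o: "W \<in> Obj X" "A \<in> Obj X" "A' \<in> Obj X" "a \<in> Hom X A A'" and d: "d \<in> Istar X I W A"
  shows "push X W A A' a d \<in> Istar X I W A'"
proof -
  obtain C i e where 1: "C \<in> Obj X" "i \<in> I W C" "e \<in> EE X C A" "d = pull X W C A i e"
    using d by (rule IstarE)
  have "push X W A A' a d = pull X W C A' i (push X C A A' a e)"
    using push_pull_comm[of W C A A' i a e] 1 o I_hom by simp
  then show ?thesis using IstarI[OF 1(1) 1(2), of "push X C A A' a e" A'] 1 o by simp
qed

lemma Istar_pull:
  assumes o: "W' \<in> Obj X" "W \<in> Obj X" "A \<in> Obj X" "c \<in> Hom X W' W" and d: "d \<in> Istar X I W A"
  shows "pull X W' W A c d \<in> Istar X I W' A"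
proof -
  obtain C i e where 1: "C \<in> Obj X" "i \<in> I W C" "e \<in> EE X C A" "d = pull X W C A i e"
    using d by (rule IstarE)
  have "pull X W' W A c d = pull X W' C A (cmp X W' W C i c) e"
    using pull_comp[of W' W C A c i e] 1 o I_hom by simp
  moreover have "cmp X W' W C i c \<in> I W' C" using ideal_comp_right[OF ideal_I] 1 o by simp
  ultimately show ?thesis using IstarI[of C "cmp X W' W C i c" W' e A] 1 by simp
qed

lemma Istar_subfunctor: "add_subfunctor X (Istar X I)"
proof -
  have "Istar X I W A \<subseteq> EE X W A" if "W \<in> Obj X" "A \<in> Obj X" for W A
    using Istar_ext that by blast
  then show ?thesis
    unfolding add_subfunctor_def
    by (simp add: Istar_ezero Istar_eadd Istar_inverse Istar_push Istar_pull)
qed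

lemma Ph_Istar_of_I: "W \<in> Obj X \<Longrightarrow> C \<in> Obj X \<Longrightarrow> f \<in> I W C \<Longrightarrow> f \<in> Ph X (Istar X I) W C"
  unfolding Ph_def using I_hom IstarI by auto

lemma IperpI:
  "g \<in> Hom X A Y \<Longrightarrow> (\<And>W C m d. W \<in> Obj X \<Longrightarrow> C \<in> Obj X \<Longrightarrow> m \<in> I W C \<Longrightarrow> d \<in> EE X C A
     \<Longrightarrow> pull X W C Y m (push X C A Y g d) = ezero X W Y) \<Longrightarrow> g \<in> Iperp X I A Y"
  unfolding Iperp_def by blast

lemma IperpD:
  "g \<in> Iperp X I A Y \<Longrightarrow> W \<in> Obj X \<Longrightarrow> C \<in> Obj X \<Longrightarrow> m \<in> I W C \<Longrightarrow> d \<in> EE X C A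
    \<Longrightarrow> pull X W C Y m (push X C A Y g d) = ezero X W Y"
  unfolding Iperp_def by blast

lemma Iperp_hom: "g \<in> Iperp X I A Y \<Longrightarrow> g \<in> Hom X A Y"
  unfolding Iperp_def by blast

lemma Iperp_madd:
  assumes o: "A \<in> Obj X" "B \<in> Obj X" and fg: "f \<in> Iperp X I A B" "g \<in> Iperp X I A B"
  shows "madd X A B f g \<in> Iperp X I A B"
proof (rule IperpI)
  have h: "f \<in> Hom X A B" "g \<in> Hom X A B" using fg Iperp_hom by auto
  then show "madd X A B f g \<in> Hom X A B" using o by simp
  fix W C m d assume w: "W \<in> Obj X" "C \<in> Obj X" "m \<in> I W C" "d \<in> EE X C A"
  have mh: "m \<in> Hom X W C" using w I_hom by auto
  have "pull X W C B m (push X C A B (madd X A B f g) d)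
      = pull X W C B m (eadd X C B (push X C A B f d) (push X C A B g d))"
    using push_madd o h w by simp
  also have "\<dots> = eadd X W B (pull X W C B m (push X C A B f d)) (pull X W C B m (push X C A B g d))"
    by (rule pull_eadd) (simp_all add: o h w mh)
  also have "\<dots> = ezero X W B" using IperpD[OF fg(1) w] IperpD[OF fg(2) w] o w by simp
  finally show "pull X W C B m (push X C A B (madd X A B f g) d) = ezero X W B" .
qed

lemma Iperp_comp:
  assumes o: "W \<in> Obj X" "A \<in> Obj X" "B \<in> Obj X" "Z \<in> Obj X" and f: "f \<in> Iperp X I A B"
    and uv: "u \<in> Hom X W A" "v \<in> Hom X B Z"
  shows "cmp X W B Z v (cmp X W A B f u) \<in> Iperp X I W Z"
proof (rule IperpI)
  have h: "f \<in> Hom X A B" using f Iperp_hom by auto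
  then show "cmp X W B Z v (cmp X W A B f u) \<in> Hom X W Z" using o uv by simp
  fix W' C m d assume w: "W' \<in> Obj X" "C \<in> Obj X" "m \<in> I W' C" "d \<in> EE X C W"
  have mh: "m \<in> Hom X W' C" using w I_hom by auto
  have "push X C W Z (cmp X W B Z v (cmp X W A B f u)) d
      = push X C B Z v (push X C W B (cmp X W A B f u) d)"
    by (rule push_comp) (simp_all add: o h uv w)
  also have "push X C W B (cmp X W A B f u) d = push X C A B f (push X C W A u d)"
    by (rule push_comp) (simp_all add: o h uv w)
  finally have "pull X W' C Z m (push X C W Z (cmp X W B Z v (cmp X W A B f u)) d)
      = pull X W' C Z m (push X C B Z v (push X C A B f (push X C W A u d)))" by simp
  also have "\<dots> = push X W' B Z v (pull X W' C B m (push X C A B f (push X C W A u d)))"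
    by (rule push_pull_comm[symmetric]) (simp_all add: o h uv w mh)
  also have "\<dots> = ezero X W' Z" using IperpD[OF f w(1-3), of "push X C W A u d"] o uv w by simp
  finally show "pull X W' C Z m (push X C W Z (cmp X W B Z v (cmp X W A B f u)) d) = ezero X W' Z" .
qed

lemma Iperp_ideal: "ideal X (Iperp X I)"
proof -
  have "Iperp X I A B \<subseteq> Hom X A B" for A B
    using Iperp_hom by blast
  moreover have "mzero X A B \<in> Iperp X I A B" if "A \<in> Obj X" "B \<in> Obj X" for A B
    by (rule IperpI) (simp_all add: that I_hom)
  ultimately show ?thesis
    unfolding ideal_def by (simp add: Iperp_madd Iperp_comp)
qed

lemma perp_object_pull_zero:
  "A \<in> ObK X (Iperp X I) \<Longrightarrow> W \<in> Obj X \<Longrightarrow> C \<in> Obj X \<Longrightarrow> m \<in> I W C \<Longrightarrow> d \<in> EE X C A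
    \<Longrightarrow> pull X W C A m d = ezero X W A"
  unfolding ObK_def using IperpD[of "idm X A" A A W C m d] by simp

lemma perp_objectI:
  "A \<in> Obj X \<Longrightarrow> (\<And>W C m d. W \<in> Obj X \<Longrightarrow> C \<in> Obj X \<Longrightarrow> m \<in> I W C \<Longrightarrow> d \<in> EE X C A
     \<Longrightarrow> pull X W C A m d = ezero X W A) \<Longrightarrow> A \<in> ObK X (Iperp X I)"
  unfolding ObK_def by (auto intro!: IperpI)

lemma F_injective_ezero:
  assumes "F_injective X F B" "C \<in> Obj X" "d \<in> F C B" "d \<in> EE X C B"
  shows "d = ezero X C B"
proof -
  have "B \<in> Obj X" "push X C B B (idm X B) d = ezero X C B"
    using assms unfolding F_injective_def Finj_def by blast+
  then show ?thesis using assms by simp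
qed

lemma F_injective_perp_object:
  assumes phantom: "\<And>W C. W \<in> Obj X \<Longrightarrow> C \<in> Obj X \<Longrightarrow> I W C \<subseteq> Ph X F W C"
    and inj: "F_injective X F B"
  shows "B \<in> ObK X (Iperp X I)"
proof (rule perp_objectI)
  show B: "B \<in> Obj X" using inj unfolding F_injective_def by blast
  fix W C m d assume w: "W \<in> Obj X" "C \<in> Obj X" "m \<in> I W C" "d \<in> EE X C B"
  have "pull X W C B m d \<in> F W B" using phantom[OF w(1,2)] w(3,4) B unfolding Ph_def by blast
  then show "pull X W C B m d = ezero X W B" using F_injective_ezero[OF inj] w B I_hom by simp
qed

section \<open>Phantoms of a subfunctor with enough injectives: (a) implies (b)\<close>

lemma subfunctor_push:
  "add_subfunctor X F \<Longrightarrow> C \<in> Obj X \<Longrightarrow> A \<in> Obj X \<Longrightarrow> A' \<in> Obj X \<Longrightarrow> a \<in> Hom X A A' \<Longrightarrow> d \<in> F C A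
    \<Longrightarrow> push X C A A' a d \<in> F C A'"
  unfolding add_subfunctor_def by blast

lemma subfunctor_pull:
  "add_subfunctor X F \<Longrightarrow> C' \<in> Obj X \<Longrightarrow> C \<in> Obj X \<Longrightarrow> A \<in> Obj X \<Longrightarrow> c \<in> Hom X C' C \<Longrightarrow> d \<in> F C A
    \<Longrightarrow> pull X C' C A c d \<in> F C' A"
  unfolding add_subfunctor_def by blast

lemma F_inflation_extends_to_F_injective:
  assumes F: "add_subfunctor X F" and r: "rlz X Z K d B x y" and dF: "d \<in> F Z K"
    and inj: "F_injective X F B'" and v: "v \<in> Hom X K B'"
  obtains u where "u \<in> Hom X B B'" "v = cmp X K B B' u x"
proof -
  from rlz_typed[OF r] have o: "K \<in> Obj X" "Z \<in> Obj X" "B \<in> Obj X" by auto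
  have B': "B' \<in> Obj X" using inj unfolding F_injective_def by blast
  have "push X Z K B' v d \<in> F Z B'" using subfunctor_push[OF F] o B' v dF by simp
  then have "push X Z K B' v d = ezero X Z B'"
    using F_injective_ezero[OF inj] rlz_typed[OF r] o B' v by simp
  then show ?thesis using extend_through_inflation[OF r B' v] that by blast
qed

lemma F_ext_of_push_zero:
  assumes F: "add_subfunctor X F" and r: "rlz X Z A d B x y" and dF: "d \<in> F Z A"
    and W: "W \<in> Obj X" and th: "th \<in> EE X W A" and z: "push X W A B x th = ezero X W B"
  shows "th \<in> F W A"
proof -
  obtain c where "c \<in> Hom X W Z" "th = pull X W Z A c d"
    using ext_pull_of_push_zero[OF r W th z] by blast
  then show ?thesis using subfunctor_pull[OF F] rlz_typed[OF r] W dF by simp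
qed

text \<open>
  Since \<open>p\<close> is a projective morphism, an extension of \<open>C\<close> pushed into an \<open>F\<close>-injective
  object comes from \<open>g\<close>, hence, \<open>x\<close> being an \<open>F\<close>-inflation, from \<open>x\<^sub>* g\<close>, which
  \<open>i\<close> kills; an \<open>F\<close>-injective envelope of \<open>A\<close> then detects membership in \<open>F(W, A)\<close>.
\<close>
lemma pushout_deflation_Ph:
  assumes F: "add_subfunctor X F" and enough: "F_enough_inj X F"
    and rg: "rlz X C K g P k p"
    and proj: "\<And>A d. A \<in> Obj X \<Longrightarrow> d \<in> EE X C A \<Longrightarrow> pull X P C A p d = ezero X P A"
    and rd: "rlz X Z K dl B0 x y" and dF: "dl \<in> F Z K"
    and rW: "rlz X C B0 (push X C K B0 x g) W w i"
  shows "i \<in> Ph X F W C"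
  unfolding Ph_def
proof (intro CollectI conjI ballI)
  from rlz_typed[OF rg] rlz_typed[OF rd] rlz_typed[OF rW]
  have o: "K \<in> Obj X" "C \<in> Obj X" "g \<in> EE X C K" "B0 \<in> Obj X" "x \<in> Hom X K B0" "W \<in> Obj X"
    "i \<in> Hom X W C" by auto
  then show "i \<in> Hom X W C" by simp
  fix A th assume A: "A \<in> Obj X" and th: "th \<in> EE X C A"
  obtain B' e' Z' y' dA where rA: "rlz X Z' A dA B' e' y'" and dAF: "dA \<in> F Z' A"
    and inj: "F_injective X F B'"
    using enough A unfolding F_enough_inj_def by blast
  from rlz_typed[OF rA] have oA: "B' \<in> Obj X" "e' \<in> Hom X A B'" by auto
  define eta where "eta = push X C A B' e' th"
  have eta: "eta \<in> EE X C B'" unfolding eta_def using o A oA th by simp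
  obtain v where v: "v \<in> Hom X K B'" "eta = push X C K B' v g"
    using ext_push_of_pull_zero[OF rg oA(1) eta proj[OF oA(1) eta]] by blast
  obtain u where u: "u \<in> Hom X B0 B'" "v = cmp X K B0 B' u x"
    using F_inflation_extends_to_F_injective[OF F rd dF inj v(1)] .
  have "eta = push X C B0 B' u (push X C K B0 x g)"
    using v u push_comp[of C K B0 B' x u g] o oA by simp
  then have "pull X W C B' i eta = push X W B0 B' u (pull X W C B0 i (push X C K B0 x g))"
    using push_pull_comm[of W C B0 B' i u "push X C K B0 x g"] o oA u by simp
  also have "\<dots> = ezero X W B'" using rlz_pull_deflation[OF rW] o oA u by simp
  finally have "push X W A B' e' (pull X W C A i th) = ezero X W B'"
    unfolding eta_def using push_pull_comm[of W C A B' i e' th] o A oA th by simp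
  then show "pull X W C A i th \<in> F W A"
    using F_ext_of_push_zero[OF F rA dAF] o A th by simp
qed

lemma cond_a_imp_cond_b:
  assumes proj: "enough_proj_morphisms X" and a: "cond_a X I"
  shows "cond_b X I"
  unfolding cond_b_def obj_special_precovering_def
proof
  obtain F where F: "add_subfunctor X F" and enough: "F_enough_inj X F"
    and IPh: "\<And>W C. W \<in> Obj X \<Longrightarrow> C \<in> Obj X \<Longrightarrow> I W C = Ph X F W C"
    using a unfolding cond_a_def by blast
  fix C assume C: "C \<in> Obj X"
  obtain K P k p g where rg: "rlz X C K g P k p"
    and pz: "\<forall>A \<in> Obj X. \<forall>d \<in> EE X C A. pull X P C A p d = ezero X P A"
    using proj C unfolding enough_proj_morphisms_def by blast
  from rlz_typed[OF rg] have oK: "K \<in> Obj X" "g \<in> EE X C K" by auto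
  obtain B0 x Z y dl where rd: "rlz X Z K dl B0 x y" and dF: "dl \<in> F Z K"
    and inj: "F_injective X F B0"
    using enough oK unfolding F_enough_inj_def by blast
  from rlz_typed[OF rd] have oB: "B0 \<in> Obj X" "x \<in> Hom X K B0" by auto
  obtain W w i where rW: "rlz X C B0 (push X C K B0 x g) W w i"
    using rlz_exists[of C B0 "push X C K B0 x g"] C oB oK by auto
  have "i \<in> I W C"
    using pushout_deflation_Ph[OF F enough rg _ rd dF rW] pz IPh C rlz_typed[OF rW] by simp
  moreover have "B0 \<in> ObK X (Iperp X I)"
    using F_injective_perp_object[OF _ inj] IPh by blast
  ultimately show "\<exists>W i. obj_special_precover X I C W i"
    unfolding obj_special_precover_def using rW by blast
qed

lemma cond_c_imp_cond_a': "cond_c X I \<Longrightarrow> cond_a' X I"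
  unfolding cond_c_def cond_a'_def using Istar_subfunctor by blast

lemma F_enough_special_inj_imp_enough_inj: "F_enough_special_inj X F \<Longrightarrow> F_enough_inj X F"
  unfolding F_enough_special_inj_def F_enough_inj_def by blast

lemma cond_a'_imp_cond_a: "cond_a' X I \<Longrightarrow> cond_a X I"
  unfolding cond_a'_def cond_a_def using F_enough_special_inj_imp_enough_inj by blast

lemma obj_special_precover_imp_special:
  assumes "obj_special_precover X I C W i"
  shows "special_precover X I C W i"
proof -
  obtain A x d where iI: "i \<in> I W C" and r: "rlz X C A d W x i" and A: "A \<in> ObK X (Iperp X I)"
    using assms unfolding obj_special_precover_def by blast
  from rlz_typed[OF r] have "etri_mor X C A d W x i C A d W x i (idm X A) (idm X W) (idm X C)"
    unfolding etri_mor_def by simp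
  moreover have "idm X A \<in> Iperp X I A A" using A unfolding ObK_def by blast
  ultimately show ?thesis unfolding special_precover_def using iI r by blast
qed

lemma cond_b_imp_special_precovering: "cond_b X I \<Longrightarrow> special_precovering X I"
  unfolding cond_b_def obj_special_precovering_def special_precovering_def
  using obj_special_precover_imp_special by blast

section \<open>Object ideals: (d) implies (b) and (c) implies (d)\<close>

lemma cond_d_imp_cond_b:
  assumes d: "cond_d X I"
  shows "cond_b X I"
  unfolding cond_b_def obj_special_precovering_def
proof
  have sp: "special_precovering X I" and oi: "object_ideal X (Iperp X I)"
    using d unfolding cond_d_def by auto
  fix C assume C: "C \<in> Obj X"
  obtain W i where "special_precover X I C W i" using sp C unfolding special_precovering_def by blast
  then obtain A B x y d A' x' d' j b where iI: "i \<in> I W C" and r1: "rlz X C A d B x y"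
    and r2: "rlz X C A' d' W x' i" and m: "etri_mor X C A d B x y C A' d' W x' i j b (idm X C)"
    and j: "j \<in> Iperp X I A A'"
    unfolding special_precover_def by blast
  from rlz_typed[OF r1] rlz_typed[OF r2]
  have o: "A \<in> Obj X" "A' \<in> Obj X" "W \<in> Obj X" "d \<in> EE X C A" by auto
  have "j \<in> factor_through (ObK X (Iperp X I)) A A'"
    using oi j o object_ideal_iff_factor_through[OF Iperp_ideal] by blast
  then obtain K u v where K: "K \<in> ObK X (Iperp X I)" "u \<in> Hom X A K" "v \<in> Hom X K A'"
    "j = cmp X A K A' v u"
    unfolding factor_through_def by blast
  have Ko: "K \<in> Obj X" using K ObK_obj by blast
  obtain B'' w y'' where r3: "rlz X C K (push X C A K u d) B'' w y''"
    using rlz_exists[of C K "push X C A K u d"] C Ko o K by auto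
  from rlz_typed[OF r3] have o3: "B'' \<in> Obj X" "y'' \<in> Hom X B'' C" by auto
  have "push X C K A' v (push X C A K u d) = push X C A A' j d"
    using push_comp[of C A K A' u v d] C o Ko K by simp
  also have "\<dots> = pull X C C A' (idm X C) d'" using etri_morD[OF m] by simp
  finally obtain b'' where "etri_mor X C K (push X C A K u d) B'' w y'' C A' d' W x' i v b'' (idm X C)"
    using rlz_morphism[OF r3 r2 K(3) id_hom[OF C]] by blast
  then have b'': "b'' \<in> Hom X B'' W" "cmp X B'' C C (idm X C) y'' = cmp X B'' W C i b''"
    using etri_morD by auto
  then have "y'' = cmp X B'' W C i b''" using o3 C by simp
  then have "y'' \<in> I B'' C" using ideal_comp_right[OF ideal_I o3(1) o(3) C iI b''(1)] by simp
  then show "\<exists>W i. obj_special_precover X I C W i"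
    unfolding obj_special_precover_def using r3 K(1) by blast
qed

lemma cond_c_object_ideal:
  assumes c: "cond_c X I"
  shows "object_ideal X (Iperp X I)"
  unfolding object_ideal_iff_factor_through[OF Iperp_ideal]
proof (intro ballI subsetI)
  fix A B f assume o: "A \<in> Obj X" "B \<in> Obj X" and f: "f \<in> Iperp X I A B"
  have IPh: "\<And>W C. W \<in> Obj X \<Longrightarrow> C \<in> Obj X \<Longrightarrow> I W C = Ph X (Istar X I) W C"
    using c unfolding cond_c_def by blast
  obtain B0 x Z0 y0 d0 B' x' C' y' d' b ph where r0: "rlz X Z0 A d0 B0 x y0"
    and inj: "F_injective X (Istar X I) B0" and r': "rlz X C' A d' B' x' y'"
    and m: "etri_mor X Z0 A d0 B0 x y0 C' A d' B' x' y' (idm X A) b ph"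
    and ph: "ph \<in> Ph X (Istar X I) Z0 C'"
    using c o(1) unfolding cond_c_def F_enough_special_inj_def by blast
  from rlz_typed[OF r0] rlz_typed[OF r'] have o0: "B0 \<in> Obj X" "Z0 \<in> Obj X" "C' \<in> Obj X"
    "d0 \<in> EE X Z0 A" "d' \<in> EE X C' A" "x \<in> Hom X A B0" by auto
  have phI: "ph \<in> I Z0 C'" using ph IPh o0 by simp
  have fH: "f \<in> Hom X A B" using f Iperp_hom by blast
  have "d0 = pull X Z0 C' A ph d'" using etri_morD[OF m] o0 o by simp
  then have "push X Z0 A B f d0 = pull X Z0 C' B ph (push X C' A B f d')"
    using push_pull_comm[of Z0 C' A B ph f d'] o0 o phI I_hom fH by simp
  also have "\<dots> = ezero X Z0 B" using IperpD[OF f o0(2) o0(3) phI o0(5)] .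
  finally obtain s where s: "s \<in> Hom X B0 B" "f = cmp X A B0 B s x"
    using extend_through_inflation[OF r0 o(2) fH] by blast
  have "B0 \<in> ObK X (Iperp X I)"
    using F_injective_perp_object[OF _ inj] Ph_Istar_of_I by blast
  then show "f \<in> factor_through (ObK X (Iperp X I)) A B"
    unfolding factor_through_def using s o0 o fH by blast
qed

lemma cond_c_imp_cond_d: "enough_proj_morphisms X \<Longrightarrow> cond_c X I \<Longrightarrow> cond_d X I"
  unfolding cond_d_def
  using cond_c_object_ideal cond_b_imp_special_precovering cond_a_imp_cond_b cond_a'_imp_cond_a
    cond_c_imp_cond_a'
  by blast

section \<open>Object-special precovers give enough special \<open>I\<^sup>\<star>\<close>-injectives: (b) implies (c)\<close>

lemma cond_b_I_eq_Ph_Istar: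
  assumes b: "cond_b X I" and o: "W \<in> Obj X" "C \<in> Obj X"
  shows "I W C = Ph X (Istar X I) W C"
proof (intro equalityI subsetI)
  fix f assume "f \<in> I W C"
  then show "f \<in> Ph X (Istar X I) W C" using Ph_Istar_of_I o by blast
next
  fix f assume f: "f \<in> Ph X (Istar X I) W C"
  then have fH: "f \<in> Hom X W C" unfolding Ph_def by blast
  obtain X0 i K x g where iI: "i \<in> I X0 C" and rg: "rlz X C K g X0 x i"
    and K: "K \<in> ObK X (Iperp X I)"
    using b o unfolding cond_b_def obj_special_precovering_def obj_special_precover_def by blast
  from rlz_typed[OF rg] have oK: "K \<in> Obj X" "X0 \<in> Obj X" "g \<in> EE X C K" by auto
  have "pull X W C K f g \<in> Istar X I W K" using f oK unfolding Ph_def by blast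
  then obtain C'' m ep where m: "C'' \<in> Obj X" "m \<in> I W C''" "ep \<in> EE X C'' K"
    "pull X W C K f g = pull X W C'' K m ep"
    by (rule IstarE)
  then have "pull X W C K f g = ezero X W K" using perp_object_pull_zero[OF K o(1)] by simp
  then obtain t where t: "t \<in> Hom X W X0" "f = cmp X W X0 C i t"
    using lift_through_deflation[OF rg o(1) fH] by blast
  then show "f \<in> I W C" using ideal_comp_right[OF ideal_I o(1) oK(2) o(2) iI] by simp
qed

lemma Istar_injective_of_perp_kernel:
  assumes r: "rlz X E K z B k b" and K: "K \<in> ObK X (Iperp X I)"
    and E_inj: "\<forall>Z \<in> Obj X. EE X Z E = {ezero X Z E}"
  shows "F_injective X (Istar X I) B"
  unfolding F_injective_def Finj_def
proof (intro conjI CollectI ballI)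
  from rlz_typed[OF r] have o: "E \<in> Obj X" "K \<in> Obj X" "B \<in> Obj X" "k \<in> Hom X K B" "b \<in> Hom X B E"
    by auto
  then show "B \<in> Obj X" "idm X B \<in> Hom X B B" by simp_all
  fix C dl assume C: "C \<in> Obj X" and dl: "dl \<in> Istar X I C B"
  obtain C'' m et where m: "C'' \<in> Obj X" "m \<in> I C C''" "et \<in> EE X C'' B" "dl = pull X C C'' B m et"
    using dl by (rule IstarE)
  have mH: "m \<in> Hom X C C''" using m C I_hom by simp
  have "push X C'' B E b et \<in> EE X C'' E" using m o by simp
  then have "push X C'' B E b et = ezero X C'' E" using E_inj m(1) by blast
  then obtain ze where ze: "ze \<in> EE X C'' K" "et = push X C'' K B k ze"
    using ext_push_of_push_zero[OF r m(1) m(3)] by blast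
  have "dl = push X C K B k (pull X C C'' K m ze)"
    using m ze push_pull_comm[of C C'' K B m k ze] C mH o by simp
  also have "\<dots> = ezero X C B" using perp_object_pull_zero[OF K C m(1) m(2) ze(1)] C o by simp
  finally show "push X C B B (idm X B) dl = ezero X C B" using C o m mH by simp
qed

text \<open>
  (ET4) for \<open>A \<rightarrow> E\<^sub>0 \<rightarrow> K\<close> and \<open>E\<^sub>0 \<rightarrow> B \<rightarrow> C\<close> realizes \<open>t\<^sub>* d'' = g\<close> by a conflation
  \<open>K \<rightarrow> X' \<rightarrow> C\<close>; its deflation \<open>c\<close> is killed by \<open>g\<close>, so it factors through the precover
  \<open>i\<close> and lies in \<open>I\<close>, whence the new extension \<open>c\<^sup>* d\<close> lies in \<open>I\<^sup>\<star>\<close>.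
\<close>
lemma Istar_inflation_from_split:
  assumes rd: "rlz X C A d E e y" and rE0: "rlz X C E0 d'' B h (cmp X B E C y b)"
    and b: "b \<in> Hom X B E" and bh: "cmp X E0 B E b h = cmp X E0 A E e ee"
    and d: "d = push X C E0 A ee d''"
    and bp: "is_biprod X A K E0 s dd ee t" and tg: "push X C E0 K t d'' = g"
    and rg: "rlz X C K g X0 k i" and iI: "i \<in> I X0 C"
  obtains X' x' h' c d' where "rlz X X' A d' B x' h'" "d' \<in> Istar X I X' A"
    "etri_mor X X' A d' B x' h' C A d E e y (idm X A) b c" "c \<in> I X' C"
proof -
  note bpd = biprodD[OF bp]
  from rlz_typed[OF rd] rlz_typed[OF rE0] rlz_typed[OF rg]
  have o: "A \<in> Obj X" "C \<in> Obj X" "E \<in> Obj X" "e \<in> Hom X A E" "d'' \<in> EE X C E0" "E0 \<in> Obj X"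
    "h \<in> Hom X E0 B" "B \<in> Obj X" "K \<in> Obj X" "X0 \<in> Obj X" "d \<in> EE X C A" by auto
  have rs: "rlz X K A (ezero X K A) E0 s t" using rlz_biprod[OF o(1,9) bp] .
  obtain X' h' dd2 c d' where X': "X' \<in> Obj X" "c \<in> Hom X X' C"
    "rlz X X' A d' B (cmp X A E0 B h s) h'" "cmp X B X' C c h' = cmp X B E C y b"
    "rlz X C K (push X C E0 K t d'') X' dd2 c" "push X X' A E0 s d' = pull X X' C E0 c d''"
    by (rule ET4E[OF rs rE0]) blast
  from rlz_typed[OF X'(3)] have d': "d' \<in> EE X X' A" by auto
  have "d' = push X X' A A (cmp X A E0 A ee s) d'" using bpd d' o X' by simp
  also have "\<dots> = push X X' E0 A ee (pull X X' C E0 c d'')"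
    using push_comp[of X' A E0 A s ee d'] X'(6) bpd d' o X' by simp
  also have "\<dots> = pull X X' C A c d"
    unfolding d by (rule push_pull_comm) (simp_all add: o X' bpd)
  finally have d'_pull: "d' = pull X X' C A c d" .
  have "rlz X C K g X' dd2 c" using X'(5) tg by simp
  then obtain w where w: "w \<in> Hom X X' X0" "c = cmp X X' X0 C i w"
    using lift_through_deflation[OF rg X'(1,2)] rlz_pull_deflation by blast
  have cI: "c \<in> I X' C" using w ideal_comp_right[OF ideal_I X'(1) o(10) o(2) iI w(1)] by simp
  have "etri_mor X X' A d' B (cmp X A E0 B h s) h' C A d E e y (idm X A) b c"
    unfolding etri_mor_def
  proof (intro conjI)
    show "idm X A \<in> Hom X A A" "b \<in> Hom X B E" "c \<in> Hom X X' C" using o b X' by simp_all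
    show "cmp X B X' C c h' = cmp X B E C y b" by (rule X'(4))
    show "push X X' A A (idm X A) d' = pull X X' C A c d" using d'_pull d' o X' by simp
    have "cmp X A B E b (cmp X A E0 B h s) = cmp X A E0 E (cmp X E0 A E e ee) s"
      using comp_assoc[of A E0 B E s h b] bh o b bpd by simp
    also have "\<dots> = cmp X A A E e (cmp X A E0 A ee s)"
      by (rule comp_assoc[symmetric]) (simp_all add: o bpd)
    finally show "cmp X A B E b (cmp X A E0 B h s) = cmp X A A E e (idm X A)" using bpd o by simp
  qed
  then show ?thesis using that X'(3) d'_pull IstarI[OF o(2) cI o(11)] cI by blast
qed

lemma Istar_special_injective_at:
  assumes b: "cond_b X I" and rd: "rlz X C A d E e y"
    and E_inj: "\<forall>Z \<in> Obj X. EE X Z E = {ezero X Z E}"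
  shows "\<exists>B e C y d B' x' C' y' d' b \<phi>.
           rlz X C A d B e y \<and> d \<in> Istar X I C A \<and> F_injective X (Istar X I) B
           \<and> rlz X C' A d' B' x' y'
           \<and> etri_mor X C A d B e y C' A d' B' x' y' (idm X A) b \<phi>
           \<and> \<phi> \<in> Ph X (Istar X I) C C'"
proof -
  from rlz_typed[OF rd] have o: "A \<in> Obj X" "C \<in> Obj X" "E \<in> Obj X" "e \<in> Hom X A E" "y \<in> Hom X E C"
    by auto
  obtain X0 i K k g where iI: "i \<in> I X0 C" and rg: "rlz X C K g X0 k i"
    and K: "K \<in> ObK X (Iperp X I)"
    using b o unfolding cond_b_def obj_special_precovering_def obj_special_precover_def by blast
  from rlz_typed[OF rg] have oK: "K \<in> Obj X" "g \<in> EE X C K" by auto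
  define z where "z = pull X E C K y g"
  obtain B k' b where rB: "rlz X E K z B k' b"
    using rlz_exists[of E K z] o oK unfolding z_def by auto
  from rlz_typed[OF rB] have bH: "b \<in> Hom X B E" by auto
  obtain E0 h dd ee d'' where E0: "rlz X C E0 d'' B h (cmp X B E C y b)"
    "cmp X E0 B E b h = cmp X E0 A E e ee" "rlz X A K (pull X A E K e z) E0 dd ee"
    "d = push X C E0 A ee d''" "push X E K E0 dd z = pull X E C E0 y d''"
    by (rule ET4opE[OF rB rd]) blast
  from rlz_typed[OF E0(1)] have d'': "d'' \<in> EE X C E0" by auto
  have "pull X A E K e z = pull X A C K (cmp X A E C y e) g"
    unfolding z_def using pull_comp[of A E C K e y g] o oK by simp
  then have rs: "rlz X A K (ezero X A K) E0 dd ee" using E0(3) rlz_comp_zero[OF rd] o oK by simp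
  obtain t where t: "t \<in> Hom X E0 K" "cmp X K E0 K t dd = idm X K" "push X C E0 K t d'' = g"
    using adjusted_retraction[OF rd rs d'' E0(4) oK(2)] E0(5) unfolding z_def by blast
  obtain s where bp: "is_biprod X A K E0 s dd ee t"
    using split_conflation_biprod[OF rs t(1,2)] .
  obtain X' x' h' c d' where "rlz X X' A d' B x' h'" "d' \<in> Istar X I X' A"
    "etri_mor X X' A d' B x' h' C A d E e y (idm X A) b c" "c \<in> I X' C"
    using Istar_inflation_from_split[OF rd E0(1) bH E0(2,4) bp t(3) rg iI] .
  moreover have "F_injective X (Istar X I) B" using Istar_injective_of_perp_kernel[OF rB K E_inj] .
  moreover have "c \<in> Ph X (Istar X I) X' C"
    using Ph_Istar_of_I calculation(1,4) rlz_typed o by blast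
  ultimately show ?thesis using rd by blast
qed

lemma cond_b_imp_cond_c:
  assumes enough: "enough_inj_objects X" and b: "cond_b X I"
  shows "cond_c X I"
proof -
  have "F_enough_special_inj X (Istar X I)"
    unfolding F_enough_special_inj_def
  proof
    fix A assume "A \<in> Obj X"
    then obtain E x C y d where "rlz X C A d E x y" "\<forall>Z \<in> Obj X. EE X Z E = {ezero X Z E}"
      using enough unfolding enough_inj_objects_def by blast
    then show "\<exists>B e C y d B' x' C' y' d' b \<phi>.
           rlz X C A d B e y \<and> d \<in> Istar X I C A \<and> F_injective X (Istar X I) B
           \<and> rlz X C' A d' B' x' y'
           \<and> etri_mor X C A d B e y C' A d' B' x' y' (idm X A) b \<phi>
           \<and> \<phi> \<in> Ph X (Istar X I) C C'"
      by (rule Istar_special_injective_at[OF b])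
  qed
  then show ?thesis unfolding cond_c_def using cond_b_I_eq_Ph_Istar[OF b] by blast
qed

end

theorem theorem5p5:
  fixes X :: "('o, 'm, 'e) extri" and I :: "'o \<Rightarrow> 'o \<Rightarrow> 'm set"
  assumes "extriangulated X" and "ideal X I"
  shows "(enough_proj_morphisms X \<longrightarrow> (cond_a X I \<longrightarrow> cond_b X I) \<and> (cond_a' X I \<longrightarrow> cond_b X I))
       \<and> (enough_inj_objects X \<longrightarrow> (cond_b X I \<longrightarrow> cond_c X I))
       \<and> (enough_proj_morphisms X \<longrightarrow> (cond_c X I \<longrightarrow> cond_d X I))
       \<and> (cond_d X I \<longrightarrow> cond_b X I)
       \<and> (cond_c X I \<longrightarrow> cond_a' X I)"
proof -
  interpret extri_ideal X I
    by unfold_locales (rule assms(1), rule assms(2))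
  show ?thesis
    using cond_a_imp_cond_b cond_a'_imp_cond_a cond_b_imp_cond_c cond_c_imp_cond_d
      cond_d_imp_cond_b cond_c_imp_cond_a'
    by blast
qed

end
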